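(* Under Assumptions 1, 2, 3 and 5, with the SMD iterates, stepsize, $g^N$, $K_1(X)$ and $K_2(X)$ as in the context, define $a(\Theta,N)=\Theta M_1/\sqrt N$, $b(\Theta,X,N)=(K_1(X)+\Theta(K_2(X)-M_1))/\sqrt N$, $\mathrm{Up}_1(\Theta_1,N)=g^N+a(\Theta_1,N)$ and $\mathrm{Low}_1(\Theta_2,\Theta_3,N)=g^N-b(\Theta_2,X,N)-a(\Theta_3,N)$. Then for all $\Theta_1,\Theta_2,\Theta_3>0$, $$\mathbb P\big(f(x_* )\in[\mathrm{Low}_1(\Theta_2,\Theta_3,N),\mathrm{Up}_1(\Theta_1,N)]\big)\ge1-e^{-\Theta_1^2/4}-e^{1-\Theta_2^2}-e^{-\Theta_2^2/4}-e^{-\Theta_3^2/4}.$$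
   Context: Proximal setup: $E$ Euclidean space, norm $\|\cdot\|$, dual norm $\|\cdot\|_*$; $X$ nonempty closed bounded convex; $\omega$ convex continuous on $X$, continuous subgradient selection $\omega'$ on $X^o$, strongly convex modulus $\mu(\omega)>0$; $x_\omega=\arg\min_X\omega$; $D_{\omega,X}=\sqrt{2[\max_X\omega-\min_X\omega]}$; $\mathrm{Prox}_x(\zeta)=\arg\min_{y\in X}\{\omega(y)+y^\top(\zeta-\omega'(x))\}$. Problem $f(x)=\mathbb E[g(x,\xi)]$, $g$ Borel convex in $x$, $f$ convex Lipschitz on $X$ with minimizer $x_*$; i.i.d. $\xi_1,\xi_2,\dots$; oracle returns $g(x,\xi_t)$ and measurable $G(x,\xi_t)\in\partial_xg(x,\xi_t)$; $f'=\mathbb EG$, $\delta=g-f$, $\Delta=G-f'$. SMD: $x_1=x_\omega$, $x_{t+1}=\mathrm{Prox}_{x_t}(\gamma G(x_t,\xi_t))$, $t=1,\dots,N-1$, $\gamma=D_{\omega,X}\sqrt{\mu(\omega)}/(\sqrt{2(M_2^2+L^2)}\sqrt N)$; $g^N=\frac1N\sum_{\tau=1}^Ng(x_\tau,\xi_\tau)$. $K_1(X)=\frac{D_{\omega,X}(M_2^2+2L^2)}{\sqrt{2(M_2^2+L^2)\mu(\omega)}}$, $K_2(X)=\frac{D_{\omega,X}M_2^2}{\sqrt{2(M_2^2+L^2)\mu(\omega)}}+\frac{2D_{\omega,X}M_2}{\sqrt{\mu(\omega)}}+M_1$. Assumption 1: $\|f'(x)\|_*\le L$ on $X$. Assumption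 2: $f=\mathbb Eg$, $\mathbb EG(x,\xi)\in\partial f(x)$. Assumption 3: $\mathbb E\delta^2\le M_1^2$, $\mathbb E\|\Delta\|_*^2\le M_2^2$ on $X$. Assumption 5: $\mathbb E\exp\{\delta^2/M_1^2\}\le e$ and $\|\Delta(x,\xi)\|_*\le M_2$ a.s. on $X$. *)

theory Defs
  imports "HOL-Probability.Probability"
begin

definition is_norm :: "('a::euclidean_space \<Rightarrow> real) \<Rightarrow> bool" where
  "is_norm nrm \<longleftrightarrow> (\<forall>x y. nrm (x + y) \<le> nrm x + nrm y)
     \<and> (\<forall>c x. nrm (c *\<^sub>R x) = \<bar>c\<bar> * nrm x) \<and> (\<forall>x. nrm x = 0 \<longleftrightarrow> x = 0)"

text \<open>Dual norm (E is identified with its dual via the inner product).\<close>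
definition dual_norm :: "('a::euclidean_space \<Rightarrow> real) \<Rightarrow> 'a \<Rightarrow> real" where
  "dual_norm nrm y = Sup {y \<bullet> x | x. nrm x \<le> 1}"

text \<open>X^o: points of X where the subdifferential of omega (extended by +infinity off X) is nonempty.\<close>
definition dom_subdiff :: "('a::euclidean_space \<Rightarrow> real) \<Rightarrow> 'a set \<Rightarrow> 'a set" where
  "dom_subdiff \<omega> X = {x \<in> X. \<exists>v. \<forall>y\<in>X. \<omega> y \<ge> \<omega> x + v \<bullet> (y - x)}"

definition prox :: "('a::euclidean_space \<Rightarrow> real) \<Rightarrow> ('a \<Rightarrow> 'a) \<Rightarrow> 'a set \<Rightarrow> 'a \<Rightarrow> 'a \<Rightarrow> 'a" where
  "prox \<omega> \<omega>' X x \<zeta> = (THE y. y \<in> X \<and>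
      (\<forall>z\<in>X. \<omega> y + y \<bullet> (\<zeta> - \<omega>' x) \<le> \<omega> z + z \<bullet> (\<zeta> - \<omega>' x)))"

definition prox_center :: "('a::euclidean_space \<Rightarrow> real) \<Rightarrow> 'a set \<Rightarrow> 'a" where
  "prox_center \<omega> X = (THE y. y \<in> X \<and> (\<forall>z\<in>X. \<omega> y \<le> \<omega> z))"

definition D_omega :: "('a::euclidean_space \<Rightarrow> real) \<Rightarrow> 'a set \<Rightarrow> real" where
  "D_omega \<omega> X = sqrt (2 * (Sup (\<omega> ` X) - Inf (\<omega> ` X)))"

text \<open>SMD iterates: smd_iter ... t is x_t for t \<ge> 1 (index 0 is a dummy copy of x_1):
  x_1 = x1, x_{t+1} = Prox_{x_t}(gamma G(x_t, xi_t)).\<close>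
primrec smd_iter :: "('a \<Rightarrow> 'a \<Rightarrow> 'a) \<Rightarrow> 'a \<Rightarrow> real \<Rightarrow> ('a \<Rightarrow> 's \<Rightarrow> 'a::real_vector)
    \<Rightarrow> (nat \<Rightarrow> 's) \<Rightarrow> nat \<Rightarrow> 'a" where
  "smd_iter P x1 \<gamma> G \<xi>s 0 = x1"
| "smd_iter P x1 \<gamma> G \<xi>s (Suc t) =
     (if t = 0 then x1
      else P (smd_iter P x1 \<gamma> G \<xi>s t) (\<gamma> *\<^sub>R G (smd_iter P x1 \<gamma> G \<xi>s t) (\<xi>s t)))"

definition smd_stepsize :: "real \<Rightarrow> real \<Rightarrow> real \<Rightarrow> real \<Rightarrow> nat \<Rightarrow> real" where
  "smd_stepsize D \<mu> M2 L N' = D * sqrt \<mu> / (sqrt (2 * (M2\<^sup>2 + L\<^sup>2)) * sqrt (real N'))"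

definition K1 :: "real \<Rightarrow> real \<Rightarrow> real \<Rightarrow> real \<Rightarrow> real" where
  "K1 D \<mu> M2 L = D * (M2\<^sup>2 + 2 * L\<^sup>2) / sqrt (2 * (M2\<^sup>2 + L\<^sup>2) * \<mu>)"

definition K2 :: "real \<Rightarrow> real \<Rightarrow> real \<Rightarrow> real \<Rightarrow> real \<Rightarrow> real" where
  "K2 D \<mu> M1 M2 L = D * M2\<^sup>2 / sqrt (2 * (M2\<^sup>2 + L\<^sup>2) * \<mu>) + 2 * D * M2 / sqrt \<mu> + M1"

definition a_bound :: "real \<Rightarrow> real \<Rightarrow> nat \<Rightarrow> real" where
  "a_bound M1 \<Theta> N' = \<Theta> * M1 / sqrt (real N')"

definition b_bound :: "real \<Rightarrow> real \<Rightarrow> real \<Rightarrow> real \<Rightarrow> nat \<Rightarrow> real" where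
  "b_bound k1 k2 M1 \<Theta> N' = (k1 + \<Theta> * (k2 - M1)) / sqrt (real N')"

end

theory Submission
  imports Defs
begin

text \<open>
  Along every sample path the mirror-descent regret bound, obtained from the three-point
  inequality of the prox-mapping and the strong convexity of \<open>\<omega>\<close>, gives
  \<open>N f(x\<^sub>*) \<ge> N g\<^sup>N - \<Sigma> \<delta>(x\<^sub>\<tau>,\<xi>\<^sub>\<tau>) - \<Sigma> \<langle>\<Delta>(x\<^sub>\<tau>,\<xi>\<^sub>\<tau>), x\<^sub>\<tau> - x\<^sub>*\<rangle> - regret\<close>,
  while \<open>f(x\<^sub>*) \<le> f(x\<^sub>\<tau>)\<close> gives \<open>N f(x\<^sub>*) \<le> N g\<^sup>N - \<Sigma> \<delta>(x\<^sub>\<tau>,\<xi>\<^sub>\<tau>)\<close>.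
  Since \<open>x\<^sub>\<tau>\<close> depends only on \<open>\<xi>\<^sub>1, \<dots>, \<xi>\<^sub>\<tau>\<^sub>-\<^sub>1\<close>, both noise sums are martingales whose
  increments are conditionally sub-Gaussian (by Assumption 5, resp. by the bound
  \<open>\<parallel>\<Delta>\<parallel>\<^sub>* \<le> M\<^sub>2\<close> together with \<open>\<parallel>x\<^sub>\<tau> - x\<^sub>*\<parallel> \<le> 2D/\<surd>\<mu>\<close>); integrating out one sample at a time bounds
  their moment generating functions, and Chernoff's bound gives each tail probability
  \<open>e\<^sup>-\<^sup>\<Theta>\<^sup>2\<^sup>/\<^sup>4\<close>. As \<open>\<Delta>\<close> is bounded almost surely, the gradient norms and hence the regret are bounded
  on an event of probability one, so the term \<open>e\<^sup>1\<^sup>-\<^sup>\<Theta>\<^sup>2\<close> of the statement is only needed (trivially) when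
  \<open>\<Theta>\<^sub>2 < 1\<close>.
\<close>

section \<open>Norms and dual norms\<close>

lemma is_norm_zero: "is_norm nrm \<Longrightarrow> nrm 0 = 0"
  unfolding is_norm_def by auto

lemma is_norm_scaleR: "is_norm nrm \<Longrightarrow> nrm (c *\<^sub>R x) = \<bar>c\<bar> * nrm x"
  unfolding is_norm_def by auto

lemma is_norm_triangle: "is_norm nrm \<Longrightarrow> nrm (x + y) \<le> nrm x + nrm y"
  unfolding is_norm_def by auto

lemma is_norm_eq_0_iff: "is_norm nrm \<Longrightarrow> nrm x = 0 \<longleftrightarrow> x = 0"
  unfolding is_norm_def by auto

lemma is_norm_minus: "is_norm nrm \<Longrightarrow> nrm (- x) = nrm x"
  using is_norm_scaleR[of nrm "-1" x] by simp

lemma is_norm_minus_commute: "is_norm nrm \<Longrightarrow> nrm (x - y) = nrm (y - x)"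
  using is_norm_minus[of nrm "x - y"] by simp

lemma is_norm_diff_triangle: "is_norm nrm \<Longrightarrow> nrm (x - z) \<le> nrm (x - y) + nrm (y - z)"
  using is_norm_triangle[of nrm "x - y" "y - z"] by simp

lemma is_norm_nonneg: "is_norm nrm \<Longrightarrow> nrm x \<ge> 0"
  using is_norm_triangle[of nrm x "- x"] is_norm_zero[of nrm] is_norm_minus[of nrm x] by simp

lemma is_norm_sum_le: "is_norm nrm \<Longrightarrow> nrm (sum f A) \<le> (\<Sum>i\<in>A. nrm (f i))"
proof (induction A rule: infinite_finite_induct)
  case (insert x F)
  then show ?case using is_norm_triangle[OF insert.prems, of "f x" "sum f F"] by simp
qed (simp_all add: is_norm_zero)

lemma is_norm_le_norm:
  fixes nrm :: "'a::euclidean_space \<Rightarrow> real"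
  assumes n: "is_norm nrm"
  obtains C where "C > 0" "\<And>x. nrm x \<le> C * norm x"
proof -
  define C where "C = 1 + (\<Sum>b\<in>Basis. nrm b)"
  have "nrm x \<le> C * norm x" for x
  proof -
    have "nrm x = nrm (\<Sum>b\<in>Basis. (x \<bullet> b) *\<^sub>R b)" by (simp add: euclidean_representation)
    also have "\<dots> \<le> (\<Sum>b\<in>Basis. nrm ((x \<bullet> b) *\<^sub>R b))" by (rule is_norm_sum_le[OF n])
    also have "\<dots> = (\<Sum>b\<in>Basis. \<bar>x \<bullet> b\<bar> * nrm b)" by (simp add: is_norm_scaleR[OF n])
    also have "\<dots> \<le> (\<Sum>b\<in>Basis. norm x * nrm b)"
      by (intro sum_mono mult_right_mono Basis_le_norm is_norm_nonneg[OF n]) auto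
    also have "\<dots> = norm x * (\<Sum>b\<in>Basis. nrm b)" by (simp add: sum_distrib_left)
    also have "\<dots> \<le> C * norm x" unfolding C_def by (simp add: algebra_simps)
    finally show ?thesis .
  qed
  moreover have "C > 0" unfolding C_def using is_norm_nonneg[OF n] by (simp add: add_pos_nonneg sum_nonneg)
  ultimately show ?thesis using that by blast
qed

lemma continuous_on_is_norm:
  fixes nrm :: "'a::euclidean_space \<Rightarrow> real"
  assumes n: "is_norm nrm"
  shows "continuous_on UNIV nrm"
proof -
  obtain C where C: "C > 0" "\<And>x. nrm x \<le> C * norm x" using is_norm_le_norm[OF n] by blast
  have "\<bar>nrm x - nrm y\<bar> \<le> C * dist x y" for x y
  proof -
    have "nrm x \<le> nrm (x - y) + nrm y" "nrm y \<le> nrm (y - x) + nrm x"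
      using is_norm_triangle[OF n, of "x - y" y] is_norm_triangle[OF n, of "y - x" x] by simp_all
    moreover have "nrm (x - y) \<le> C * dist x y" "nrm (y - x) \<le> C * dist x y"
      using C(2)[of "x - y"] C(2)[of "y - x"] by (auto simp: dist_norm norm_minus_commute)
    ultimately show ?thesis by linarith
  qed
  hence "C-lipschitz_on UNIV nrm" using C(1) by (intro lipschitz_onI) (auto simp: dist_real_def)
  thus ?thesis by (rule lipschitz_on_continuous_on)
qed

text \<open>Equivalence of norms in finite dimension: the minimum of \<open>nrm\<close> on the unit sphere.\<close>

lemma norm_le_is_norm:
  fixes nrm :: "'a::euclidean_space \<Rightarrow> real"
  assumes n: "is_norm nrm"
  obtains c where "c > 0" "\<And>x. c * norm x \<le> nrm x"
proof -
  obtain m where m: "m \<in> sphere (0::'a) 1" "\<forall>y\<in>sphere 0 1. nrm m \<le> nrm y"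
    using continuous_attains_inf[OF compact_sphere _ continuous_on_subset[OF continuous_on_is_norm[OF n]],
        of 0 1] by auto
  have "nrm m > 0" using is_norm_nonneg[OF n, of m] is_norm_eq_0_iff[OF n, of m] m(1) by fastforce
  moreover have "nrm m * norm x \<le> nrm x" for x
  proof (cases "x = 0")
    case False
    have "nrm m \<le> nrm ((1 / norm x) *\<^sub>R x)" using m(2) False by (simp add: norm_scaleR)
    also have "\<dots> = nrm x / norm x" by (simp add: is_norm_scaleR[OF n])
    finally show ?thesis using False by (simp add: field_simps)
  qed (simp add: is_norm_zero[OF n])
  ultimately show ?thesis using that by blast
qed

lemma dual_norm_set_nonempty: "is_norm nrm \<Longrightarrow> {v \<bullet> x | x. nrm x \<le> 1} \<noteq> {}"
proof -
  assume "is_norm nrm"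
  then have "v \<bullet> 0 \<in> {v \<bullet> x | x. nrm x \<le> 1}" by (intro CollectI exI[of _ 0]) (simp add: is_norm_zero)
  then show ?thesis by blast
qed

lemma dual_norm_set_bounded:
  fixes nrm :: "'a::euclidean_space \<Rightarrow> real"
  assumes n: "is_norm nrm"
  obtains c where "c > 0" "\<And>v z. z \<in> {v \<bullet> x | x. nrm x \<le> 1} \<Longrightarrow> z \<le> norm v / c"
proof -
  obtain c where c: "c > 0" "\<And>x. c * norm x \<le> nrm x" using norm_le_is_norm[OF n] by blast
  have "z \<le> norm v / c" if z: "z \<in> {v \<bullet> x | x. nrm x \<le> 1}" for v z
  proof -
    obtain x where x: "z = v \<bullet> x" "nrm x \<le> 1" using z by blast
    have "norm x \<le> 1 / c" using c x(2) by (smt (verit) mult.commute pos_le_divide_eq)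
    have "z \<le> norm v * norm x" using x(1) norm_cauchy_schwarz by simp
    also have "\<dots> \<le> norm v * (1 / c)" using \<open>norm x \<le> 1 / c\<close> by (rule mult_left_mono) auto
    finally show ?thesis by simp
  qed
  thus ?thesis using that c(1) by blast
qed

lemma dual_norm_upper:
  assumes "is_norm nrm" "nrm x \<le> 1"
  shows "v \<bullet> x \<le> dual_norm nrm v"
proof -
  obtain c where c: "\<And>v z. z \<in> {v \<bullet> x | x. nrm x \<le> 1} \<Longrightarrow> z \<le> norm v / c"
    using dual_norm_set_bounded[OF assms(1)] by blast
  have "bdd_above {v \<bullet> x | x. nrm x \<le> 1}" by (rule bdd_aboveI) (rule c)
  moreover have "v \<bullet> x \<in> {v \<bullet> x | x. nrm x \<le> 1}" using assms(2) by blast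
  ultimately show ?thesis unfolding dual_norm_def by (rule cSup_upper[rotated])
qed

lemma dual_norm_least:
  assumes "is_norm nrm" "\<And>x. nrm x \<le> 1 \<Longrightarrow> v \<bullet> x \<le> b"
  shows "dual_norm nrm v \<le> b"
  unfolding dual_norm_def
  by (rule cSup_least[OF dual_norm_set_nonempty[OF assms(1)]]) (use assms(2) in fastforce)

lemma dual_norm_nonneg: "is_norm nrm \<Longrightarrow> dual_norm nrm v \<ge> 0"
  using dual_norm_upper[of nrm 0 v] is_norm_zero[of nrm] by simp

lemma inner_le_dual_norm:
  assumes n: "is_norm nrm"
  shows "v \<bullet> x \<le> dual_norm nrm v * nrm x"
proof (cases "x = 0")
  case False
  have np: "nrm x > 0" using is_norm_nonneg[OF n, of x] is_norm_eq_0_iff[OF n, of x] False by linarith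
  have "v \<bullet> ((1 / nrm x) *\<^sub>R x) \<le> dual_norm nrm v"
    using np by (intro dual_norm_upper[OF n]) (simp add: is_norm_scaleR[OF n])
  thus ?thesis using np by (simp add: field_simps)
qed (simp add: is_norm_zero[OF n])

lemma dual_norm_le_norm:
  fixes nrm :: "'a::euclidean_space \<Rightarrow> real"
  assumes n: "is_norm nrm"
  obtains c where "c > 0" "\<And>v. dual_norm nrm v \<le> norm v / c"
proof -
  obtain c where c: "c > 0" "\<And>v z. z \<in> {v \<bullet> x | x. nrm x \<le> 1} \<Longrightarrow> z \<le> norm v / c"
    using dual_norm_set_bounded[OF n] by blast
  have "dual_norm nrm v \<le> norm v / c" for v
    by (intro dual_norm_least[OF n] c(2)) blast
  thus ?thesis using that c(1) by blast
qed

lemma dual_norm_triangle: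
  assumes n: "is_norm nrm"
  shows "dual_norm nrm (u + v) \<le> dual_norm nrm u + dual_norm nrm v"
proof (rule dual_norm_least[OF n])
  fix x assume x: "nrm x \<le> 1"
  have "u \<bullet> x \<le> dual_norm nrm u" "v \<bullet> x \<le> dual_norm nrm v"
    using dual_norm_upper[OF n x] by auto
  thus "(u + v) \<bullet> x \<le> dual_norm nrm u + dual_norm nrm v" by (simp add: inner_add_left)
qed

lemma dual_norm_scaleR_le:
  assumes n: "is_norm nrm" and c: "c \<ge> 0"
  shows "dual_norm nrm (c *\<^sub>R v) \<le> c * dual_norm nrm v"
proof (rule dual_norm_least[OF n])
  fix x assume "nrm x \<le> 1"
  then have "v \<bullet> x \<le> dual_norm nrm v" by (rule dual_norm_upper[OF n])
  then show "(c *\<^sub>R v) \<bullet> x \<le> c * dual_norm nrm v" using c by (simp add: mult_left_mono)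
qed

lemma abs_inner_le_dual_norm:
  assumes n: "is_norm nrm"
  shows "\<bar>v \<bullet> x\<bar> \<le> dual_norm nrm v * nrm x"
proof -
  have "- (v \<bullet> x) \<le> dual_norm nrm v * nrm x"
    using inner_le_dual_norm[OF n, of v "- x"] unfolding is_norm_minus[OF n] by simp
  then show ?thesis using inner_le_dual_norm[OF n, of v x] by linarith
qed

lemma continuous_on_dual_norm:
  fixes nrm :: "'a::euclidean_space \<Rightarrow> real"
  assumes n: "is_norm nrm"
  shows "continuous_on UNIV (dual_norm nrm)"
proof -
  obtain c where c: "c > 0" "\<And>v. dual_norm nrm v \<le> norm v / c" using dual_norm_le_norm[OF n] by blast
  have "\<bar>dual_norm nrm u - dual_norm nrm v\<bar> \<le> (1/c) * dist u v" for u v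
  proof -
    have "dual_norm nrm u \<le> dual_norm nrm (u - v) + dual_norm nrm v"
      "dual_norm nrm v \<le> dual_norm nrm (v - u) + dual_norm nrm u"
      using dual_norm_triangle[OF n, of "u - v" v] dual_norm_triangle[OF n, of "v - u" u] by simp_all
    moreover have "dual_norm nrm (u - v) \<le> (1/c) * dist u v" "dual_norm nrm (v - u) \<le> (1/c) * dist u v"
      using c(2)[of "u - v"] c(2)[of "v - u"] by (auto simp: dist_norm norm_minus_commute)
    ultimately show ?thesis by linarith
  qed
  hence "(1/c)-lipschitz_on UNIV (dual_norm nrm)" using c(1) by (intro lipschitz_onI) (auto simp: dist_real_def)
  thus ?thesis by (rule lipschitz_on_continuous_on)
qed

section \<open>The distance-generating function\<close>

lemma measurable_continuous_on_comp:
  assumes "continuous_on D f" "h \<in> borel_measurable N" "\<forall>b\<in>space N. h b \<in> D"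
  shows "(\<lambda>b. f (h b)) \<in> borel_measurable N"
  using measurable_comp[OF measurable_restrict_space2[OF _ assms(2)]
      borel_measurable_continuous_on_restrict[OF assms(1)]] assms(3)
  by (simp add: comp_def Pi_iff)

lemma ge_of_forall_ge_minus_mult:
  fixes A B C :: real
  assumes "C \<ge> 0" "\<And>t. 0 < t \<Longrightarrow> t \<le> 1 \<Longrightarrow> A \<ge> B - t * C"
  shows "A \<ge> B"
proof (rule ccontr)
  assume "\<not> A \<ge> B"
  hence ab: "B - A > 0" by simp
  show False
  proof (cases "C = 0")
    case True then show False using assms(2)[of 1] ab by simp
  next
    case False
    hence Cp: "C > 0" using assms(1) by simp
    define t where "t = min 1 ((B - A) / (2 * C))"
    have t: "0 < t" "t \<le> 1" using ab Cp unfolding t_def by auto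
    have "t * C \<le> (B - A) / (2 * C) * C" using Cp unfolding t_def by (intro mult_right_mono) auto
    also have "\<dots> = (B - A) / 2" using Cp by simp
    finally have tc: "t * C \<le> (B - A) / 2" .
    have "B - t * C \<le> A" using assms(2)[OF t] by simp
    thus False using tc ab unfolding diff_divide_distrib by linarith
  qed
qed

lemma tendsto_of_close_to_segment:
  fixes zs :: "nat \<Rightarrow> 'a::real_normed_vector"
  assumes s: "\<And>i. s i > 0" "\<And>i. s i \<le> 1" and s0: "s \<longlonglongrightarrow> 0"
    and close: "\<And>i. norm (zs i - (y + s i *\<^sub>R d)) < (s i)\<^sup>2"
  shows "zs \<longlonglongrightarrow> y"
proof -
  have "(\<lambda>i. zs i - y) \<longlonglongrightarrow> 0"
  proof (rule Lim_null_comparison)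
    show "\<forall>\<^sub>F i in sequentially. norm (zs i - y) \<le> s i * (1 + norm d)"
    proof (intro always_eventually allI)
      fix i
      have "norm (zs i - y) \<le> norm (zs i - (y + s i *\<^sub>R d)) + norm (s i *\<^sub>R d)"
        using norm_triangle_ineq[of "zs i - (y + s i *\<^sub>R d)" "s i *\<^sub>R d"] by simp
      also have "\<dots> \<le> (s i)\<^sup>2 + s i * norm d" using close[of i] s[of i] by simp
      also have "\<dots> \<le> s i + s i * norm d" using s[of i] by (simp add: power2_eq_square mult_le_cancel_left1)
      finally show "norm (zs i - y) \<le> s i * (1 + norm d)" by (simp add: algebra_simps)
    qed
    show "(\<lambda>i. s i * (1 + norm d)) \<longlonglongrightarrow> 0" using tendsto_mult_left_zero[OF s0] by simp
  qed
  then show ?thesis by (simp add: LIM_zero_iff)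
qed

lemma difference_quotient_tendsto:
  fixes zs :: "nat \<Rightarrow> 'a::real_normed_vector"
  assumes s: "\<And>i. s i > 0" and s0: "s \<longlonglongrightarrow> 0"
    and close: "\<And>i. norm (zs i - (y + s i *\<^sub>R d)) < (s i)\<^sup>2"
  shows "(\<lambda>i. inverse (s i) *\<^sub>R (zs i - y)) \<longlonglongrightarrow> d"
proof -
  have "(\<lambda>i. inverse (s i) *\<^sub>R (zs i - y) - d) \<longlonglongrightarrow> 0"
  proof (rule Lim_null_comparison)
    show "\<forall>\<^sub>F i in sequentially. norm (inverse (s i) *\<^sub>R (zs i - y) - d) \<le> s i"
    proof (intro always_eventually allI)
      fix i
      have "inverse (s i) *\<^sub>R (zs i - y) - d = inverse (s i) *\<^sub>R (zs i - (y + s i *\<^sub>R d))"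
        using s[of i] by (simp add: algebra_simps)
      then have "norm (inverse (s i) *\<^sub>R (zs i - y) - d) = inverse (s i) * norm (zs i - (y + s i *\<^sub>R d))"
        using s[of i] by simp
      also have "\<dots> \<le> inverse (s i) * (s i)\<^sup>2" using close[of i] s[of i] by (intro mult_left_mono) auto
      also have "\<dots> = s i" using s[of i] by (simp add: power2_eq_square)
      finally show "norm (inverse (s i) *\<^sub>R (zs i - y) - d) \<le> s i" .
    qed
  qed (rule s0)
  then show ?thesis by (simp add: LIM_zero_iff)
qed

locale distance_generating =
  fixes nrm :: "'a::euclidean_space \<Rightarrow> real" and X :: "'a set"
    and \<omega> :: "'a \<Rightarrow> real" and \<omega>' :: "'a \<Rightarrow> 'a" and \<mu> :: real
  assumes nrm_norm: "is_norm nrm"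
    and X_nonempty: "X \<noteq> {}" and X_compact: "compact X" and X_convex: "convex X"
    and omega_convex: "convex_on X \<omega>" and omega_continuous: "continuous_on X \<omega>"
    and omega'_subgradient: "\<forall>x\<in>dom_subdiff \<omega> X. \<forall>y\<in>X. \<omega> y \<ge> \<omega> x + \<omega>' x \<bullet> (y - x)"
    and omega'_continuous: "continuous_on (dom_subdiff \<omega> X) \<omega>'"
    and mu_pos: "\<mu> > 0"
    and omega'_strongly_monotone: "\<forall>x\<in>dom_subdiff \<omega> X. \<forall>x'\<in>dom_subdiff \<omega> X.
           (x' - x) \<bullet> (\<omega>' x' - \<omega>' x) \<ge> \<mu> * (nrm (x' - x))\<^sup>2"

context distance_generating
begin

definition subgradient_at :: "'a \<Rightarrow> 'a \<Rightarrow> bool" where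
  "subgradient_at x v \<longleftrightarrow> x \<in> X \<and> (\<forall>y\<in>X. \<omega> y \<ge> \<omega> x + v \<bullet> (y - x))"

lemma subgradient_at_dom_subdiff: "subgradient_at x v \<Longrightarrow> x \<in> dom_subdiff \<omega> X"
  unfolding subgradient_at_def dom_subdiff_def by blast

lemma dom_subdiff_in_X: "x \<in> dom_subdiff \<omega> X \<Longrightarrow> x \<in> X"
  unfolding dom_subdiff_def by blast

lemma subgradient_at_omega': "x \<in> dom_subdiff \<omega> X \<Longrightarrow> subgradient_at x (\<omega>' x)"
  unfolding subgradient_at_def using omega'_subgradient dom_subdiff_in_X by blast

lemma omega_bounded: "\<exists>B. \<forall>x\<in>X. \<bar>\<omega> x\<bar> \<le> B"
proof -
  have "compact (\<omega> ` X)" by (rule compact_continuous_image[OF omega_continuous X_compact])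
  then obtain B where "\<forall>y\<in>\<omega> ` X. norm y \<le> B" using compact_imp_bounded bounded_iff by blast
  thus ?thesis by auto
qed

lemma perturbed_min_exists: "\<exists>y\<in>X. \<forall>z\<in>X. \<omega> y + y \<bullet> c \<le> \<omega> z + z \<bullet> c"
proof -
  have "continuous_on X (\<lambda>z. \<omega> z + z \<bullet> c)"
    by (intro continuous_intros omega_continuous)
  from continuous_attains_inf[OF X_compact X_nonempty this] show ?thesis by blast
qed

lemma perturbed_min_subgradient:
  assumes "y \<in> X" "\<forall>z\<in>X. \<omega> y + y \<bullet> c \<le> \<omega> z + z \<bullet> c"
  shows "subgradient_at y (- c)"
  unfolding subgradient_at_def using assms by (auto simp: inner_diff_right inner_commute)

lemma penalized_min_subgradient:
  fixes k :: real and p z :: 'a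
  assumes k: "k \<ge> 0" and z: "z \<in> X" and zmin: "\<forall>u\<in>X. \<omega> z + k * (norm (z - p))\<^sup>2 \<le> \<omega> u + k * (norm (u - p))\<^sup>2"
  shows "subgradient_at z (- (2 * k) *\<^sub>R (z - p))"
  unfolding subgradient_at_def
proof (intro conjI ballI z)
  fix u assume u: "u \<in> X"
  have key: "\<omega> u - \<omega> z \<ge> - (2 * k) * ((z - p) \<bullet> (u - z)) - t * (k * (norm (u - z))\<^sup>2)"
    if t: "0 < t" "t \<le> 1" for t
  proof -
    define ut where "ut = (1 - t) *\<^sub>R z + t *\<^sub>R u"
    have utX: "ut \<in> X" unfolding ut_def using t z u X_convex by (intro convexD) auto
    have cv: "\<omega> ut \<le> (1 - t) * \<omega> z + t * \<omega> u" unfolding ut_def using convex_onD[OF omega_convex] t z u by auto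
    have ut2: "ut - p = (z - p) + t *\<^sub>R (u - z)" unfolding ut_def by (simp add: algebra_simps)
    have nn: "(norm (ut - p))\<^sup>2 = (norm (z - p))\<^sup>2 + 2 * t * ((z - p) \<bullet> (u - z)) + t\<^sup>2 * (norm (u - z))\<^sup>2"
      unfolding ut2 power2_norm_eq_inner by (simp add: inner_add_left inner_add_right inner_commute power2_eq_square algebra_simps)
    have "\<omega> z + k * (norm (z - p))\<^sup>2 \<le> \<omega> ut + k * (norm (ut - p))\<^sup>2" using zmin utX by blast
    hence "t * (\<omega> u - \<omega> z) \<ge> - k * (2 * t * ((z - p) \<bullet> (u - z)) + t\<^sup>2 * (norm (u - z))\<^sup>2)"
      using cv nn by (simp add: algebra_simps)
    hence "t * (\<omega> u - \<omega> z) \<ge> t * (- (2 * k) * ((z - p) \<bullet> (u - z)) - t * (k * (norm (u - z))\<^sup>2))"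
      by (simp add: algebra_simps power2_eq_square)
    thus ?thesis using t by (simp add: mult_le_cancel_left)
  qed
  have "\<omega> u - \<omega> z \<ge> - (2 * k) * ((z - p) \<bullet> (u - z))"
    by (rule ge_of_forall_ge_minus_mult[of "k * (norm (u - z))\<^sup>2"]) (use key k in auto)
  thus "\<omega> z + (- (2 * k) *\<^sub>R (z - p)) \<bullet> (u - z) \<le> \<omega> u" by simp
qed

text \<open>The minimisers of \<open>\<omega> + k \<parallel>\<cdot> - p\<parallel>\<^sup>2\<close>, \<open>k = 1, 2, \<dots>\<close>, have subgradients and converge to \<open>p\<close>.\<close>

lemma dom_subdiff_approx:
  assumes p: "p \<in> X"
  shows "\<exists>zs vs. (\<forall>i. subgradient_at (zs i) (vs i) \<and> vs i \<bullet> (zs i - p) \<le> 0) \<and> zs \<longlonglongrightarrow> p"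
proof -
  obtain B where B: "\<forall>x\<in>X. \<bar>\<omega> x\<bar> \<le> B" using omega_bounded by blast
  have "\<exists>z\<in>X. \<forall>u\<in>X. \<omega> z + real (Suc i) * (norm (z - p))\<^sup>2 \<le> \<omega> u + real (Suc i) * (norm (u - p))\<^sup>2" for i
  proof -
    have "continuous_on X (\<lambda>z. \<omega> z + real (Suc i) * (norm (z - p))\<^sup>2)"
      by (intro continuous_intros omega_continuous)
    from continuous_attains_inf[OF X_compact X_nonempty this] show ?thesis by blast
  qed
  then obtain zs where zs: "\<And>i. zs i \<in> X"
    "\<And>i. \<forall>u\<in>X. \<omega> (zs i) + real (Suc i) * (norm (zs i - p))\<^sup>2 \<le> \<omega> u + real (Suc i) * (norm (u - p))\<^sup>2"
    by metis
  define vs where "vs i = - (2 * real (Suc i)) *\<^sub>R (zs i - p)" for i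
  have sg: "subgradient_at (zs i) (vs i)" for i unfolding vs_def by (rule penalized_min_subgradient) (use zs in auto)
  have neg: "vs i \<bullet> (zs i - p) \<le> 0" for i
    unfolding vs_def by (simp add: mult_nonpos_nonneg)
  have bnd: "(norm (zs i - p))\<^sup>2 \<le> 2 * B / real (Suc i)" for i
  proof -
    have "\<omega> (zs i) + real (Suc i) * (norm (zs i - p))\<^sup>2 \<le> \<omega> p" using zs(2)[of i] p by auto
    moreover have "\<bar>\<omega> (zs i)\<bar> \<le> B" "\<bar>\<omega> p\<bar> \<le> B" using B zs(1) p by auto
    ultimately have "real (Suc i) * (norm (zs i - p))\<^sup>2 \<le> 2 * B" by linarith
    thus ?thesis by (simp add: field_simps)
  qed
  have B0: "B \<ge> 0" using B p by force
  have "zs \<longlonglongrightarrow> p"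
  proof (rule LIMSEQ_I)
    fix r :: real assume r: "r > 0"
    obtain N :: nat where N: "2 * B / r\<^sup>2 < real N" using reals_Archimedean2 by blast
    have "norm (zs i - p) < r" if "i \<ge> N" for i
    proof -
      have "2 * B < r\<^sup>2 * real N" using N r by (simp add: field_simps)
      also have "\<dots> \<le> r\<^sup>2 * real (Suc i)" using that by (intro mult_left_mono) auto
      finally have "2 * B / real (Suc i) < r\<^sup>2" by (simp add: field_simps)
      hence "(norm (zs i - p))\<^sup>2 < r\<^sup>2" using bnd[of i] by linarith
      thus ?thesis using r by (simp add: power_less_imp_less_base)
    qed
    thus "\<exists>no. \<forall>i\<ge>no. norm (zs i - p) < r" by blast
  qed
  thus ?thesis using sg neg by blast
qed

lemma dom_subdiff_difference_quotients:
  assumes y: "y \<in> X" and u: "u \<in> X"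
  obtains zs s where "\<And>i. zs i \<in> dom_subdiff \<omega> X" "\<And>i. s i > (0::real)" "zs \<longlonglongrightarrow> y"
    "(\<lambda>i. inverse (s i) *\<^sub>R (zs i - y)) \<longlonglongrightarrow> u - y"
proof -
  define s :: "nat \<Rightarrow> real" where "s i = inverse (real (Suc i))" for i
  have s: "s i > 0" "s i \<le> 1" for i unfolding s_def by (auto simp: field_simps)
  have s0: "s \<longlonglongrightarrow> 0" unfolding s_def by (rule LIMSEQ_inverse_real_of_nat)
  have "\<exists>z\<in>dom_subdiff \<omega> X. norm (z - (y + s i *\<^sub>R (u - y))) < (s i)\<^sup>2" for i
  proof -
    have "(1 - s i) *\<^sub>R y + s i *\<^sub>R u \<in> X" using X_convex y u s[of i] by (intro convexD) auto
    then have "y + s i *\<^sub>R (u - y) \<in> X" by (simp add: algebra_simps)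
    then obtain zs vs where sub: "\<forall>j. subgradient_at (zs j) (vs j)"
      and lim: "zs \<longlonglongrightarrow> y + s i *\<^sub>R (u - y)"
      using dom_subdiff_approx by blast
    obtain j where "norm (zs j - (y + s i *\<^sub>R (u - y))) < (s i)\<^sup>2"
      using LIMSEQ_D[OF lim, of "(s i)\<^sup>2"] s[of i] by auto
    then show ?thesis using subgradient_at_dom_subdiff sub by blast
  qed
  then obtain zs where zs: "\<And>i. zs i \<in> dom_subdiff \<omega> X" "\<And>i. norm (zs i - (y + s i *\<^sub>R (u - y))) < (s i)\<^sup>2"
    by metis
  from that[OF zs(1) s(1) tendsto_of_close_to_segment[OF s s0 zs(2)]
      difference_quotient_tendsto[OF s(1) s0 zs(2)]]
  show ?thesis .
qed

lemma perturbed_min_optimality: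
  assumes y: "y \<in> X" and ymin: "\<forall>z\<in>X. \<omega> y + y \<bullet> c \<le> \<omega> z + z \<bullet> c" and u: "u \<in> X"
  shows "(\<omega>' y + c) \<bullet> (u - y) \<ge> 0"
proof -
  have ydom: "y \<in> dom_subdiff \<omega> X" using perturbed_min_subgradient[OF y ymin] subgradient_at_dom_subdiff by blast
  obtain zs s where zs: "\<And>i. zs i \<in> dom_subdiff \<omega> X" and s: "\<And>i. s i > 0" and zy: "zs \<longlonglongrightarrow> y"
    and dl: "(\<lambda>i. inverse (s i) *\<^sub>R (zs i - y)) \<longlonglongrightarrow> u - y"
    using dom_subdiff_difference_quotients[OF y u] by blast
  have og: "(\<lambda>i. \<omega>' (zs i)) \<longlonglongrightarrow> \<omega>' y"
    by (rule continuous_on_tendsto_compose[OF omega'_continuous zy ydom]) (use zs in auto)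
  have lim: "(\<lambda>i. (\<omega>' (zs i) + c) \<bullet> (inverse (s i) *\<^sub>R (zs i - y))) \<longlonglongrightarrow> (\<omega>' y + c) \<bullet> (u - y)"
    by (intro tendsto_inner tendsto_add og dl tendsto_const)
  have nn: "(\<omega>' (zs i) + c) \<bullet> (inverse (s i) *\<^sub>R (zs i - y)) \<ge> 0" for i
  proof -
    have zX: "zs i \<in> X" using zs(1) dom_subdiff_in_X by blast
    have "\<omega> y \<ge> \<omega> (zs i) + \<omega>' (zs i) \<bullet> (y - zs i)" using omega'_subgradient zs(1) y by blast
    moreover have "\<omega> y + y \<bullet> c \<le> \<omega> (zs i) + zs i \<bullet> c" using ymin zX by blast
    ultimately have "(\<omega>' (zs i) + c) \<bullet> (zs i - y) \<ge> 0"
      by (simp add: inner_add_left inner_diff_right inner_commute algebra_simps)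
    thus ?thesis using s[of i] by simp
  qed
  show ?thesis by (rule LIMSEQ_le_const[OF lim]) (use nn in auto)
qed

lemma subgradient_at_optimality:
  assumes "subgradient_at z v" "u \<in> X"
  shows "(\<omega>' z - v) \<bullet> (u - z) \<ge> 0"
proof -
  have "\<forall>y\<in>X. \<omega> z + z \<bullet> (- v) \<le> \<omega> y + y \<bullet> (- v)"
    using assms(1) unfolding subgradient_at_def by (auto simp: inner_diff_right inner_commute)
  from perturbed_min_optimality[OF _ this assms(2)] assms(1) show ?thesis unfolding subgradient_at_def by simp
qed

lemma subgradient_strongly_monotone:
  assumes z: "subgradient_at z v" and x: "subgradient_at x w"
  shows "(v - w) \<bullet> (z - x) \<ge> \<mu> * (nrm (z - x))\<^sup>2"
proof -
  have xX: "x \<in> X" and zX: "z \<in> X" using assms unfolding subgradient_at_def by auto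
  have a: "(\<omega>' z - v) \<bullet> (x - z) \<ge> 0" by (rule subgradient_at_optimality[OF z xX])
  have b: "(\<omega>' x - w) \<bullet> (z - x) \<ge> 0" by (rule subgradient_at_optimality[OF x zX])
  have c: "(z - x) \<bullet> (\<omega>' z - \<omega>' x) \<ge> \<mu> * (nrm (z - x))\<^sup>2" using omega'_strongly_monotone subgradient_at_dom_subdiff[OF z] subgradient_at_dom_subdiff[OF x] by blast
  have "(v - w) \<bullet> (z - x) = (\<omega>' z - v) \<bullet> (x - z) + (z - x) \<bullet> (\<omega>' z - \<omega>' x) + (\<omega>' x - w) \<bullet> (z - x)"
    by (simp add: inner_diff_left inner_diff_right inner_commute algebra_simps)
  thus ?thesis using a b c by linarith
qed

lemma isCont_nrm: "isCont nrm x"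
  using continuous_on_is_norm[OF nrm_norm] continuous_on_eq_continuous_at open_UNIV by blast

text \<open>
  Strong monotonicity of \<open>\<omega>'\<close> yields strong convexity of \<open>\<omega>\<close> by bootstrapping: a modulus
  \<open>\<alpha>\<close> for all subgradients improves to \<open>\<alpha>/2 + \<mu>/4\<close> by splitting at the midpoint of \<open>x\<close>
  and \<open>y\<close> (approximated from \<open>dom_subdiff \<omega> X\<close>, where strong monotonicity applies); iterating
  converges to \<open>\<mu>/2\<close>.
\<close>

lemma strong_convexity_improve:
  assumes a0: "\<alpha> \<ge> 0"
    and Cl: "\<And>x w y. subgradient_at x w \<Longrightarrow> y \<in> X \<Longrightarrow> \<omega> y - \<omega> x - w \<bullet> (y - x) \<ge> \<alpha> * (nrm (y - x))\<^sup>2"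
    and x: "subgradient_at x w" and y: "y \<in> X"
  shows "\<omega> y - \<omega> x - w \<bullet> (y - x) \<ge> (\<alpha> / 2 + \<mu> / 4) * (nrm (y - x))\<^sup>2"
proof -
  have xX: "x \<in> X" using x unfolding subgradient_at_def by auto
  define m where "m = (1/2) *\<^sub>R (x + y)"
  have mX: "m \<in> X" unfolding m_def using convexD[OF X_convex xX y, of "1/2" "1/2"] by (simp add: algebra_simps)
  obtain zs vs where zv: "\<And>i. subgradient_at (zs i) (vs i)" "\<And>i. vs i \<bullet> (zs i - m) \<le> 0" "zs \<longlonglongrightarrow> m"
    using dom_subdiff_approx[OF mX] by blast
  define LHS where "LHS = \<omega> y - \<omega> x - w \<bullet> (y - x)"
  define R where "R i = (\<alpha> + \<mu>) * (nrm (zs i - x))\<^sup>2 + \<alpha> * (nrm (y - zs i))\<^sup>2 + 2 * (w \<bullet> (zs i - m))" for i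
  have bound: "R i \<le> LHS" for i
  proof -
    let ?z = "zs i" and ?v = "vs i"
    have zX: "?z \<in> X" using zv(1)[of i] unfolding subgradient_at_def by auto
    have id: "LHS = (\<omega> ?z - \<omega> x - w \<bullet> (?z - x)) + (\<omega> y - \<omega> ?z - ?v \<bullet> (y - ?z)) + (?v - w) \<bullet> (y - ?z)"
      unfolding LHS_def by (simp add: inner_diff_left inner_diff_right algebra_simps)
    have yz: "y - ?z = (?z - x) - 2 *\<^sub>R (?z - m)" unfolding m_def by (simp add: algebra_simps scaleR_2)
    have t3: "(?v - w) \<bullet> (y - ?z) = (?v - w) \<bullet> (?z - x) - 2 * (?v \<bullet> (?z - m)) + 2 * (w \<bullet> (?z - m))"
      unfolding yz by (simp add: inner_diff_left inner_diff_right algebra_simps)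
    have "\<omega> ?z - \<omega> x - w \<bullet> (?z - x) \<ge> \<alpha> * (nrm (?z - x))\<^sup>2" by (rule Cl[OF x zX])
    moreover have "\<omega> y - \<omega> ?z - ?v \<bullet> (y - ?z) \<ge> \<alpha> * (nrm (y - ?z))\<^sup>2" by (rule Cl[OF zv(1) y])
    moreover have "(?v - w) \<bullet> (?z - x) \<ge> \<mu> * (nrm (?z - x))\<^sup>2" by (rule subgradient_strongly_monotone[OF zv(1) x])
    ultimately show ?thesis using id t3 zv(2)[of i] unfolding R_def by (simp add: algebra_simps)
  qed
  have d1: "nrm (m - x) = nrm (y - x) / 2"
  proof -
    have "m - x = (1/2) *\<^sub>R (y - x)" unfolding m_def by (simp add: algebra_simps flip: scaleR_add_left)
    thus ?thesis by (simp add: is_norm_scaleR[OF nrm_norm])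
  qed
  have d2: "nrm (y - m) = nrm (y - x) / 2"
  proof -
    have "y - m = (1/2) *\<^sub>R (y - x)" unfolding m_def by (simp add: algebra_simps flip: scaleR_add_left)
    thus ?thesis by (simp add: is_norm_scaleR[OF nrm_norm])
  qed
  have lim1: "(\<lambda>i. nrm (zs i - x)) \<longlonglongrightarrow> nrm (m - x)"
    by (rule isCont_tendsto_compose[OF isCont_nrm]) (intro tendsto_intros zv(3))
  have lim2: "(\<lambda>i. nrm (y - zs i)) \<longlonglongrightarrow> nrm (y - m)"
    by (rule isCont_tendsto_compose[OF isCont_nrm]) (intro tendsto_intros zv(3))
  have "R \<longlonglongrightarrow> (\<alpha> + \<mu>) * (nrm (m - x))\<^sup>2 + \<alpha> * (nrm (y - m))\<^sup>2 + 2 * (w \<bullet> (m - m))"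
    unfolding R_def by (intro tendsto_intros lim1 lim2 zv(3))
  hence "(\<alpha> + \<mu>) * (nrm (m - x))\<^sup>2 + \<alpha> * (nrm (y - m))\<^sup>2 \<le> LHS"
    using LIMSEQ_le_const2[of R] bound by auto
  moreover have "(\<alpha> + \<mu>) * (nrm (m - x))\<^sup>2 + \<alpha> * (nrm (y - m))\<^sup>2 = (\<alpha> / 2 + \<mu> / 4) * (nrm (y - x))\<^sup>2"
    unfolding d1 d2 by (simp add: power2_eq_square field_simps)
  ultimately show ?thesis unfolding LHS_def by simp
qed

lemma strong_convexity_iterate:
  "subgradient_at x w \<Longrightarrow> y \<in> X \<Longrightarrow> \<omega> y - \<omega> x - w \<bullet> (y - x) \<ge> (\<mu> / 2 * (1 - (1/2)^k)) * (nrm (y - x))\<^sup>2"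
proof (induction k arbitrary: x w y)
  case 0
  then show ?case unfolding subgradient_at_def by auto
next
  case (Suc k)
  have a0: "\<mu> / 2 * (1 - (1/2)^k) \<ge> 0" using mu_pos by (simp add: power_le_one)
  have "\<omega> y - \<omega> x - w \<bullet> (y - x) \<ge> ((\<mu> / 2 * (1 - (1/2)^k)) / 2 + \<mu> / 4) * (nrm (y - x))\<^sup>2"
    by (rule strong_convexity_improve[OF a0 Suc.IH Suc.prems])
  moreover have "(\<mu> / 2 * (1 - (1/2)^k)) / 2 + \<mu> / 4 = \<mu> / 2 * (1 - (1/2)^Suc k)"
    by (simp add: field_simps)
  ultimately show ?case by metis
qed

lemma strong_convexity:
  assumes "subgradient_at x w" "y \<in> X"
  shows "\<omega> y - \<omega> x - w \<bullet> (y - x) \<ge> \<mu> / 2 * (nrm (y - x))\<^sup>2"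
proof -
  have "(\<lambda>k. (\<mu> / 2 * (1 - (1/2)^k)) * (nrm (y - x))\<^sup>2) \<longlonglongrightarrow> (\<mu> / 2 * (1 - 0)) * (nrm (y - x))\<^sup>2"
    by (intro tendsto_intros LIMSEQ_realpow_zero) auto
  thus ?thesis using LIMSEQ_le_const2 strong_convexity_iterate[OF assms] by fastforce
qed


subsection \<open>Prox-mapping and mirror descent\<close>

definition prox_argmin :: "'a \<Rightarrow> 'a" where
  "prox_argmin c = (THE y. y \<in> X \<and> (\<forall>z\<in>X. \<omega> y + y \<bullet> c \<le> \<omega> z + z \<bullet> c))"

lemma perturbed_min_unique:
  assumes "y1 \<in> X" "\<forall>z\<in>X. \<omega> y1 + y1 \<bullet> c \<le> \<omega> z + z \<bullet> c"
    "y2 \<in> X" "\<forall>z\<in>X. \<omega> y2 + y2 \<bullet> c \<le> \<omega> z + z \<bullet> c"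
  shows "y1 = y2"
proof -
  have a: "(\<omega>' y1 + c) \<bullet> (y2 - y1) \<ge> 0" by (rule perturbed_min_optimality[OF assms(1,2,3)])
  have b: "(\<omega>' y2 + c) \<bullet> (y1 - y2) \<ge> 0" by (rule perturbed_min_optimality[OF assms(3,4,1)])
  have d1: "y1 \<in> dom_subdiff \<omega> X" using perturbed_min_subgradient[OF assms(1,2)] subgradient_at_dom_subdiff by blast
  have d2: "y2 \<in> dom_subdiff \<omega> X" using perturbed_min_subgradient[OF assms(3,4)] subgradient_at_dom_subdiff by blast
  have c: "(y2 - y1) \<bullet> (\<omega>' y2 - \<omega>' y1) \<ge> \<mu> * (nrm (y2 - y1))\<^sup>2" using omega'_strongly_monotone d1 d2 by blast
  have "(y2 - y1) \<bullet> (\<omega>' y2 - \<omega>' y1) = - ((\<omega>' y1 + c) \<bullet> (y2 - y1) + (\<omega>' y2 + c) \<bullet> (y1 - y2))"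
    by (simp add: inner_diff_left inner_diff_right inner_add_left inner_commute algebra_simps)
  hence "\<mu> * (nrm (y2 - y1))\<^sup>2 \<le> 0" using a b c by linarith
  hence "nrm (y2 - y1) = 0" using mu_pos by (simp add: mult_le_0_iff)
  thus ?thesis using is_norm_eq_0_iff[OF nrm_norm] by simp
qed

lemma prox_argmin_minimizes:
  "prox_argmin c \<in> X" "\<forall>z\<in>X. \<omega> (prox_argmin c) + prox_argmin c \<bullet> c \<le> \<omega> z + z \<bullet> c"
proof -
  have "\<exists>!y. y \<in> X \<and> (\<forall>z\<in>X. \<omega> y + y \<bullet> c \<le> \<omega> z + z \<bullet> c)"
    using perturbed_min_exists[of c] perturbed_min_unique by blast
  from theI'[OF this] show "prox_argmin c \<in> X" "\<forall>z\<in>X. \<omega> (prox_argmin c) + prox_argmin c \<bullet> c \<le> \<omega> z + z \<bullet> c"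
    unfolding prox_argmin_def by auto
qed

lemma prox_argmin_dom_subdiff: "prox_argmin c \<in> dom_subdiff \<omega> X"
  using perturbed_min_subgradient[OF prox_argmin_minimizes] subgradient_at_dom_subdiff by blast

lemma prox_argmin_optimality: "u \<in> X \<Longrightarrow> (\<omega>' (prox_argmin c) + c) \<bullet> (u - prox_argmin c) \<ge> 0"
  by (rule perturbed_min_optimality[OF prox_argmin_minimizes])

lemma prox_argmin_lipschitz: "nrm (prox_argmin c - prox_argmin d) \<le> dual_norm nrm (d - c) / \<mu>"
proof -
  let ?yc = "prox_argmin c" and ?yd = "prox_argmin d"
  have a: "(\<omega>' ?yc + c) \<bullet> (?yd - ?yc) \<ge> 0" by (rule prox_argmin_optimality[OF prox_argmin_minimizes(1)])
  have b: "(\<omega>' ?yd + d) \<bullet> (?yc - ?yd) \<ge> 0" by (rule prox_argmin_optimality[OF prox_argmin_minimizes(1)])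
  have s: "(?yc - ?yd) \<bullet> (\<omega>' ?yc - \<omega>' ?yd) \<ge> \<mu> * (nrm (?yc - ?yd))\<^sup>2" using omega'_strongly_monotone prox_argmin_dom_subdiff by blast
  have "(?yc - ?yd) \<bullet> (\<omega>' ?yc - \<omega>' ?yd) = (d - c) \<bullet> (?yc - ?yd) - ((\<omega>' ?yc + c) \<bullet> (?yd - ?yc) + (\<omega>' ?yd + d) \<bullet> (?yc - ?yd))"
    by (simp add: inner_diff_left inner_diff_right inner_add_left inner_commute algebra_simps)
  moreover have "(d - c) \<bullet> (?yc - ?yd) \<le> dual_norm nrm (d - c) * nrm (?yc - ?yd)" by (rule inner_le_dual_norm[OF nrm_norm])
  ultimately have "\<mu> * (nrm (?yc - ?yd))\<^sup>2 \<le> dual_norm nrm (d - c) * nrm (?yc - ?yd)" using a b s by linarith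
  hence *: "nrm (?yc - ?yd) * (\<mu> * nrm (?yc - ?yd)) \<le> nrm (?yc - ?yd) * dual_norm nrm (d - c)"
    by (simp add: power2_eq_square algebra_simps)
  show ?thesis
  proof (cases "nrm (?yc - ?yd) = 0")
    case True then show ?thesis using dual_norm_nonneg[OF nrm_norm] mu_pos by simp
  next
    case False
    hence "nrm (?yc - ?yd) > 0" using is_norm_nonneg[OF nrm_norm] by (simp add: less_le)
    hence "\<mu> * nrm (?yc - ?yd) \<le> dual_norm nrm (d - c)" using * by simp
    thus ?thesis using mu_pos by (simp add: field_simps)
  qed
qed

lemma continuous_on_prox_argmin: "continuous_on UNIV prox_argmin"
proof -
  obtain c1 where c1: "c1 > 0" "\<forall>x. c1 * norm x \<le> nrm x" using norm_le_is_norm[OF nrm_norm] by blast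
  obtain c2 where c2: "c2 > 0" "\<And>v. dual_norm nrm v \<le> norm v / c2" using dual_norm_le_norm[OF nrm_norm] by blast
  have "dist (prox_argmin c) (prox_argmin d) \<le> (1 / (c1 * c2 * \<mu>)) * dist c d" for c d
  proof -
    have "c1 * norm (prox_argmin c - prox_argmin d) \<le> nrm (prox_argmin c - prox_argmin d)" using c1 by blast
    also have "\<dots> \<le> dual_norm nrm (d - c) / \<mu>" by (rule prox_argmin_lipschitz)
    also have "\<dots> \<le> (norm (d - c) / c2) / \<mu>" using divide_right_mono[OF c2(2)[of "d - c"], of \<mu>] mu_pos by simp
    finally have "c1 * norm (prox_argmin c - prox_argmin d) \<le> norm (d - c) / c2 / \<mu>" .
    thus ?thesis using c1 c2 mu_pos by (simp add: dist_norm norm_minus_commute field_simps)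
  qed
  hence "(1 / (c1 * c2 * \<mu>))-lipschitz_on UNIV prox_argmin" using c1 c2 mu_pos by (intro lipschitz_onI) auto
  thus ?thesis by (rule lipschitz_on_continuous_on)
qed

lemma prox_eq_prox_argmin: "prox \<omega> \<omega>' X x \<zeta> = prox_argmin (\<zeta> - \<omega>' x)"
  unfolding prox_def prox_argmin_def ..

lemma prox_center_eq_prox_argmin: "prox_center \<omega> X = prox_argmin 0"
  unfolding prox_center_def prox_argmin_def by simp

lemma measurable_prox:
  assumes "h \<in> borel_measurable N" "\<forall>b\<in>space N. h b \<in> dom_subdiff \<omega> X" "k \<in> borel_measurable N"
  shows "(\<lambda>b. prox \<omega> \<omega>' X (h b) (k b)) \<in> borel_measurable N"
proof -
  have "(\<lambda>b. \<omega>' (h b)) \<in> borel_measurable N" by (rule measurable_continuous_on_comp[OF omega'_continuous assms(1,2)])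
  hence "(\<lambda>b. k b - \<omega>' (h b)) \<in> borel_measurable N" using assms(3) by measurable
  moreover have "prox_argmin \<in> borel_measurable borel" by (rule borel_measurable_continuous_onI[OF continuous_on_prox_argmin])
  ultimately have "(\<lambda>b. prox_argmin (k b - \<omega>' (h b))) \<in> borel_measurable N" by measurable
  thus ?thesis unfolding prox_eq_prox_argmin .
qed

definition bregman :: "'a \<Rightarrow> 'a \<Rightarrow> real" where
  "bregman a b = \<omega> b - \<omega> a - \<omega>' a \<bullet> (b - a)"

lemma bregman_nonneg: "a \<in> dom_subdiff \<omega> X \<Longrightarrow> b \<in> X \<Longrightarrow> bregman a b \<ge> 0"
  unfolding bregman_def using omega'_subgradient by fastforce

lemma bregman_ge: "a \<in> dom_subdiff \<omega> X \<Longrightarrow> b \<in> X \<Longrightarrow> bregman a b \<ge> \<mu> / 2 * (nrm (b - a))\<^sup>2"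
  unfolding bregman_def using strong_convexity[OF subgradient_at_omega'] by blast

lemma prox_three_point:
  assumes x: "x \<in> dom_subdiff \<omega> X" and u: "u \<in> X"
  shows "\<zeta> \<bullet> (x - u) \<le> bregman x u - bregman (prox \<omega> \<omega>' X x \<zeta>) u + (dual_norm nrm \<zeta>)\<^sup>2 / (2 * \<mu>)"
proof -
  define y where "y = prox \<omega> \<omega>' X x \<zeta>"
  have y: "y = prox_argmin (\<zeta> - \<omega>' x)" unfolding y_def prox_eq_prox_argmin ..
  have yX: "y \<in> X" unfolding y using prox_argmin_minimizes by blast
  have yd: "y \<in> dom_subdiff \<omega> X" unfolding y using prox_argmin_dom_subdiff by blast
  have opt: "(\<omega>' y + (\<zeta> - \<omega>' x)) \<bullet> (u - y) \<ge> 0" unfolding y by (rule prox_argmin_optimality[OF u])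
  have three: "bregman x u - bregman y u - bregman x y = (\<omega>' y - \<omega>' x) \<bullet> (u - y)"
    unfolding bregman_def by (simp add: inner_diff_left inner_diff_right algebra_simps)
  have vs: "bregman x y \<ge> \<mu> / 2 * (nrm (y - x))\<^sup>2" by (rule bregman_ge[OF x yX])
  have cs: "\<zeta> \<bullet> (x - y) \<le> dual_norm nrm \<zeta> * nrm (y - x)"
    using inner_le_dual_norm[OF nrm_norm, of \<zeta> "x - y"] is_norm_minus_commute[OF nrm_norm, of x y] by simp
  have am: "dual_norm nrm \<zeta> * nrm (y - x) \<le> (dual_norm nrm \<zeta>)\<^sup>2 / (2 * \<mu>) + \<mu> / 2 * (nrm (y - x))\<^sup>2"
  proof -
    have "0 \<le> (dual_norm nrm \<zeta> - \<mu> * nrm (y - x))\<^sup>2" by simp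
    hence "2 * \<mu> * (dual_norm nrm \<zeta> * nrm (y - x)) \<le> (dual_norm nrm \<zeta>)\<^sup>2 + \<mu>\<^sup>2 * (nrm (y - x))\<^sup>2"
      by (simp add: power2_eq_square algebra_simps)
    thus ?thesis using mu_pos by (simp add: field_simps power2_eq_square)
  qed
  have "\<zeta> \<bullet> (y - u) \<le> (\<omega>' y - \<omega>' x) \<bullet> (u - y)"
    using opt by (simp add: inner_diff_left inner_diff_right inner_add_left algebra_simps)
  moreover have "\<zeta> \<bullet> (x - u) = \<zeta> \<bullet> (x - y) + \<zeta> \<bullet> (y - u)" by (simp add: inner_diff_right)
  ultimately show ?thesis using three vs cs am unfolding y_def[symmetric] by linarith
qed

lemma omega_le_Sup: "x \<in> X \<Longrightarrow> \<omega> x \<le> Sup (\<omega> ` X)"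
proof -
  obtain B where "\<forall>x\<in>X. \<bar>\<omega> x\<bar> \<le> B" using omega_bounded by blast
  hence "bdd_above (\<omega> ` X)" by (auto simp: bdd_above_def abs_le_iff intro!: exI[of _ B])
  thus "x \<in> X \<Longrightarrow> \<omega> x \<le> Sup (\<omega> ` X)" by (intro cSup_upper) auto
qed

lemma Inf_le_omega: "x \<in> X \<Longrightarrow> Inf (\<omega> ` X) \<le> \<omega> x"
proof -
  obtain B where "\<forall>x\<in>X. \<bar>\<omega> x\<bar> \<le> B" using omega_bounded by blast
  hence "bdd_below (\<omega> ` X)" by (auto simp: bdd_below_def abs_le_iff intro!: exI[of _ "-B"])
  thus "x \<in> X \<Longrightarrow> Inf (\<omega> ` X) \<le> \<omega> x" by (intro cInf_lower) auto
qed

lemma bregman_prox_center_le: "u \<in> X \<Longrightarrow> bregman (prox_argmin 0) u \<le> Sup (\<omega> ` X) - Inf (\<omega> ` X)"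
proof -
  assume u: "u \<in> X"
  have "(\<omega>' (prox_argmin 0) + 0) \<bullet> (u - prox_argmin 0) \<ge> 0" by (rule prox_argmin_optimality[OF u])
  thus ?thesis unfolding bregman_def using omega_le_Sup[OF u] Inf_le_omega[OF prox_argmin_minimizes(1)[of 0]] by simp
qed

lemma D_omega_sq: "(D_omega \<omega> X)\<^sup>2 = 2 * (Sup (\<omega> ` X) - Inf (\<omega> ` X))"
proof -
  have "Inf (\<omega> ` X) \<le> Sup (\<omega> ` X)" using omega_le_Sup[OF prox_argmin_minimizes(1)[of 0]] Inf_le_omega[OF prox_argmin_minimizes(1)[of 0]] by linarith
  hence "0 \<le> 2 * (Sup (\<omega> ` X) - Inf (\<omega> ` X))" by simp
  thus ?thesis unfolding D_omega_def by (rule real_sqrt_pow2)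
qed

lemma D_omega_nonneg: "D_omega \<omega> X \<ge> 0"
proof -
  have "Inf (\<omega> ` X) \<le> Sup (\<omega> ` X)" using omega_le_Sup[OF prox_argmin_minimizes(1)[of 0]] Inf_le_omega[OF prox_argmin_minimizes(1)[of 0]] by linarith
  thus ?thesis unfolding D_omega_def by simp
qed

lemma nrm_prox_center_le: "u \<in> X \<Longrightarrow> nrm (u - prox_argmin 0) \<le> D_omega \<omega> X / sqrt \<mu>"
proof -
  assume u: "u \<in> X"
  have "bregman (prox_argmin 0) u \<le> (D_omega \<omega> X)\<^sup>2 / 2" using bregman_prox_center_le[OF u] D_omega_sq by simp
  hence "\<mu> / 2 * (nrm (u - prox_argmin 0))\<^sup>2 \<le> (D_omega \<omega> X)\<^sup>2 / 2"
    using bregman_ge[OF prox_argmin_dom_subdiff[of 0] u] by (rule order.trans[rotated])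
  hence "(sqrt \<mu> * nrm (u - prox_argmin 0))\<^sup>2 \<le> (D_omega \<omega> X)\<^sup>2" using mu_pos by (simp add: power_mult_distrib)
  hence "sqrt \<mu> * nrm (u - prox_argmin 0) \<le> D_omega \<omega> X"
    using D_omega_nonneg by (rule power2_le_imp_le)
  thus ?thesis using mu_pos by (simp add: field_simps)
qed


abbreviation "smd_x \<gamma> G ss t \<equiv> smd_iter (prox \<omega> \<omega>' X) (prox_center \<omega> X) \<gamma> G ss t"

lemma smd_x_dom_subdiff: "smd_x \<gamma> G ss t \<in> dom_subdiff \<omega> X"
proof (induction t)
  case 0 then show ?case using prox_argmin_dom_subdiff prox_center_eq_prox_argmin by simp
next
  case (Suc t) then show ?case using prox_argmin_dom_subdiff prox_center_eq_prox_argmin by (simp add: prox_eq_prox_argmin)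
qed

lemma smd_x_in_X: "smd_x \<gamma> G ss t \<in> X"
  using smd_x_dom_subdiff dom_subdiff_in_X by blast

lemma smd_x_1: "smd_x \<gamma> G ss (Suc 0) = prox_argmin 0"
  using prox_center_eq_prox_argmin by simp

lemma smd_regret_telescope:
  assumes g: "\<gamma> \<ge> 0" and u: "u \<in> X"
  shows "\<gamma> * (\<Sum>\<tau>=1..N. G (smd_x \<gamma> G ss \<tau>) (ss \<tau>) \<bullet> (smd_x \<gamma> G ss \<tau> - u))
    \<le> bregman (smd_x \<gamma> G ss 1) u - bregman (smd_x \<gamma> G ss (Suc N)) u
       + \<gamma>\<^sup>2 / (2 * \<mu>) * (\<Sum>\<tau>=1..N. (dual_norm nrm (G (smd_x \<gamma> G ss \<tau>) (ss \<tau>)))\<^sup>2)"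
proof (induction N)
  case 0 then show ?case by simp
next
  case (Suc N)
  let ?x = "smd_x \<gamma> G ss (Suc N)" and ?g = "G (smd_x \<gamma> G ss (Suc N)) (ss (Suc N))"
  have st: "(\<gamma> *\<^sub>R ?g) \<bullet> (?x - u) \<le> bregman ?x u - bregman (smd_x \<gamma> G ss (Suc (Suc N))) u + (dual_norm nrm (\<gamma> *\<^sub>R ?g))\<^sup>2 / (2 * \<mu>)"
    using prox_three_point[OF smd_x_dom_subdiff[of \<gamma> G ss "Suc N"] u, of "\<gamma> *\<^sub>R ?g"] by simp
  have "(dual_norm nrm (\<gamma> *\<^sub>R ?g))\<^sup>2 \<le> (\<gamma> * dual_norm nrm ?g)\<^sup>2"
    using dual_norm_scaleR_le[OF nrm_norm g, of ?g] dual_norm_nonneg[OF nrm_norm, of "\<gamma> *\<^sub>R ?g"] by (intro power_mono) auto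
  hence "(dual_norm nrm (\<gamma> *\<^sub>R ?g))\<^sup>2 / (2 * \<mu>) \<le> \<gamma>\<^sup>2 / (2 * \<mu>) * (dual_norm nrm ?g)\<^sup>2"
    using mu_pos by (simp add: divide_right_mono power_mult_distrib)
  hence st2: "\<gamma> * (?g \<bullet> (?x - u)) \<le> bregman ?x u - bregman (smd_x \<gamma> G ss (Suc (Suc N))) u + \<gamma>\<^sup>2 / (2 * \<mu>) * (dual_norm nrm ?g)\<^sup>2"
    using st by simp
  show ?case using Suc.IH st2 by (simp add: algebra_simps)
qed

lemma smd_regret_bound:
  assumes g: "\<gamma> > 0" and u: "u \<in> X"
  shows "(\<Sum>\<tau>=1..N. G (smd_x \<gamma> G ss \<tau>) (ss \<tau>) \<bullet> (smd_x \<gamma> G ss \<tau> - u))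
    \<le> (D_omega \<omega> X)\<^sup>2 / (2 * \<gamma>) + \<gamma> / (2 * \<mu>) * (\<Sum>\<tau>=1..N. (dual_norm nrm (G (smd_x \<gamma> G ss \<tau>) (ss \<tau>)))\<^sup>2)"
proof -
  let ?S = "\<Sum>\<tau>=1..N. G (smd_x \<gamma> G ss \<tau>) (ss \<tau>) \<bullet> (smd_x \<gamma> G ss \<tau> - u)"
  let ?T = "\<Sum>\<tau>=1..N. (dual_norm nrm (G (smd_x \<gamma> G ss \<tau>) (ss \<tau>)))\<^sup>2"
  have "bregman (smd_x \<gamma> G ss 1) u \<le> (D_omega \<omega> X)\<^sup>2 / 2" using bregman_prox_center_le[OF u] D_omega_sq smd_x_1 by simp
  moreover have "bregman (smd_x \<gamma> G ss (Suc N)) u \<ge> 0" by (rule bregman_nonneg[OF smd_x_dom_subdiff u])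
  ultimately have "\<gamma> * ?S \<le> (D_omega \<omega> X)\<^sup>2 / 2 + \<gamma>\<^sup>2 / (2 * \<mu>) * ?T"
    using smd_regret_telescope[OF less_imp_le[OF g] u, of G ss N] by linarith
  hence "(\<gamma> * ?S) / \<gamma> \<le> ((D_omega \<omega> X)\<^sup>2 / 2 + \<gamma>\<^sup>2 / (2 * \<mu>) * ?T) / \<gamma>"
    using g by (intro divide_right_mono) auto
  moreover have "((D_omega \<omega> X)\<^sup>2 / 2 + \<gamma>\<^sup>2 / (2 * \<mu>) * ?T) / \<gamma> = (D_omega \<omega> X)\<^sup>2 / (2 * \<gamma>) + \<gamma> / (2 * \<mu>) * ?T"
    using g by (simp add: field_simps power2_eq_square)
  ultimately show ?thesis using g by simp
qed

lemma measurable_smd_x: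
  assumes Gm: "(\<lambda>(x, s). G x s) \<in> borel_measurable (borel \<Otimes>\<^sub>M S)"
  shows "t \<le> Suc n \<Longrightarrow> (\<lambda>a. smd_x \<gamma> G a t) \<in> borel_measurable (PiM {1..n} (\<lambda>_. S))"
proof (induction t)
  case 0 then show ?case by simp
next
  case (Suc t)
  show ?case
  proof (cases "t = 0")
    case True then show ?thesis by simp
  next
    case False
    have ih: "(\<lambda>a. smd_x \<gamma> G a t) \<in> borel_measurable (PiM {1..n} (\<lambda>_. S))" using Suc by simp
    have tn: "t \<in> {1..n}" using False Suc.prems by auto
    have "(\<lambda>a. (smd_x \<gamma> G a t, a t)) \<in> measurable (PiM {1..n} (\<lambda>_. S)) (borel \<Otimes>\<^sub>M S)"
      by (rule measurable_Pair[OF ih measurable_component_singleton[OF tn]])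
    from measurable_compose[OF this Gm]
    have "(\<lambda>a. G (smd_x \<gamma> G a t) (a t)) \<in> borel_measurable (PiM {1..n} (\<lambda>_. S))" by simp
    hence k: "(\<lambda>a. \<gamma> *\<^sub>R G (smd_x \<gamma> G a t) (a t)) \<in> borel_measurable (PiM {1..n} (\<lambda>_. S))" by measurable
    have "(\<lambda>a. prox \<omega> \<omega>' X (smd_x \<gamma> G a t) (\<gamma> *\<^sub>R G (smd_x \<gamma> G a t) (a t))) \<in> borel_measurable (PiM {1..n} (\<lambda>_. S))"
      by (rule measurable_prox[OF ih _ k]) (simp add: smd_x_dom_subdiff)
    thus ?thesis using False by simp
  qed
qed

end

lemma smd_iter_prefix:
  "(\<forall>i\<in>{1..<t}. ss i = ss' i) \<Longrightarrow> smd_iter P x1 \<gamma> G ss t = smd_iter P x1 \<gamma> G ss' t"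
proof (induction t)
  case 0 then show ?case by simp
next
  case (Suc t)
  have "\<forall>i\<in>{1..<t}. ss i = ss' i" using Suc.prems by auto
  hence ih: "smd_iter P x1 \<gamma> G ss t = smd_iter P x1 \<gamma> G ss' t" by (rule Suc.IH)
  show ?case
  proof (cases "t = 0")
    case True then show ?thesis by simp
  next
    case False
    hence "ss t = ss' t" using Suc.prems by auto
    thus ?thesis using ih False by simp
  qed
qed

section \<open>Sub-Gaussian moment bounds\<close>

lemma exp_le_one_plus_square:
  fixes x :: real
  assumes "x \<le> 1"
  shows "exp x \<le> 1 + x + x\<^sup>2"
proof (cases "x \<ge> 0")
  case True
  then show ?thesis using assms exp_bound[of x] by simp
next
  case neg: False
  show ?thesis
  proof (cases "x \<le> -1")
    case True
    have "x * x \<ge> - x" using True mult_right_mono_neg[of x "-1" x] by simp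
    moreover have "exp x \<le> 1" using neg by simp
    ultimately show ?thesis unfolding power2_eq_square by linarith
  next
    case False
    define y where "y = - x"
    have y: "0 \<le> y" "y \<le> 1" using False neg unfolding y_def by auto
    have "(y - 1/2)\<^sup>2 \<ge> 0" by simp
    then have pos: "1 - y + y\<^sup>2 > 0" by (simp add: power2_eq_square algebra_simps)
    have "(1 + y + y\<^sup>2 / 2) * (1 - y + y\<^sup>2) = 1 + y\<^sup>2/2 + y^3/2 + y^4/2"
      by (simp add: power2_eq_square power3_eq_cube power4_eq_xxxx field_simps)
    then have "1 \<le> (1 + y + y\<^sup>2 / 2) * (1 - y + y\<^sup>2)" using y by simp
    also have "\<dots> \<le> exp y * (1 - y + y\<^sup>2)"
      using exp_lower_Taylor_quadratic[OF y(1)] pos by (intro mult_right_mono) auto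
    finally have "exp (- y) \<le> 1 - y + y\<^sup>2" by (simp add: exp_minus field_simps)
    then show ?thesis unfolding y_def by simp
  qed
qed

lemma exp_le_add_exp_square: "exp (x::real) \<le> x + exp (x\<^sup>2)"
proof (cases "x \<ge> 1")
  case True
  then have "exp x \<le> exp (x\<^sup>2)" by (simp add: power2_eq_square)
  then show ?thesis using True by linarith
next
  case False
  then show ?thesis using exp_le_one_plus_square[of x] exp_ge_add_one_self[of "x\<^sup>2"] by linarith
qed

lemma exp_mult_le_convex_comb:
  fixes p a :: real
  assumes "0 \<le> p" "p \<le> 1"
  shows "exp (p * a) \<le> p * exp a + (1 - p)"
proof -
  have "convex_on UNIV (\<lambda>x::real. exp (1 * x))" by (rule convex_on_exp) simp
  from convex_onD[OF this, of p 0 a] assms show ?thesis by (simp add: algebra_simps)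
qed

lemma exp_moment_power_bound:
  fixes Q :: "'s measure" and W :: "'s \<Rightarrow> real"
  assumes Q: "prob_space Q" and Wm: "W \<in> borel_measurable Q"
    and int: "integrable Q (\<lambda>s. exp (W s))" and le: "(\<integral>s. exp (W s) \<partial>Q) \<le> exp 1"
    and p: "0 \<le> p" "p \<le> 1"
  shows "integrable Q (\<lambda>s. exp (p * W s))" "(\<integral>s. exp (p * W s) \<partial>Q) \<le> exp p"
proof -
  interpret prob_space Q by (rule Q)
  have pt: "exp (p * W s) \<le> exp (p - 1) * p * exp (W s) + exp p * (1 - p)" for s
  proof -
    have "exp (p * W s) = exp p * exp (p * (W s - 1))" by (simp add: algebra_simps flip: exp_add)
    also have "\<dots> \<le> exp p * (p * exp (W s - 1) + (1 - p))"
      using exp_mult_le_convex_comb[OF p, of "W s - 1"] by (intro mult_left_mono) auto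
    also have "\<dots> = exp (p - 1) * p * exp (W s) + exp p * (1 - p)"
      by (simp add: algebra_simps exp_diff)
    finally show ?thesis .
  qed
  have ir: "integrable Q (\<lambda>s. exp (p - 1) * p * exp (W s) + exp p * (1 - p))"
    using int by auto
  have pt2: "exp (p * W s) \<le> \<bar>exp (p - 1) * p * exp (W s) + exp p * (1 - p)\<bar>" for s
    using pt[of s] by linarith
  show i: "integrable Q (\<lambda>s. exp (p * W s))"
    by (rule Bochner_Integration.integrable_bound[OF ir]) (use Wm pt2 in \<open>auto intro!: always_eventually\<close>)
  have "(\<integral>s. exp (p * W s) \<partial>Q) \<le> (\<integral>s. exp (p - 1) * p * exp (W s) + exp p * (1 - p) \<partial>Q)"
    by (rule integral_mono[OF i ir pt])
  also have "\<dots> = exp (p - 1) * p * (\<integral>s. exp (W s) \<partial>Q) + exp p * (1 - p)"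
    using int by (simp add: prob_space)
  also have "\<dots> \<le> exp (p - 1) * p * exp 1 + exp p * (1 - p)"
    using le p by (intro add_mono mult_left_mono) auto
  also have "\<dots> = exp p" by (simp add: algebra_simps flip: exp_add)
  finally show "(\<integral>s. exp (p * W s) \<partial>Q) \<le> exp p" .
qed

text \<open>
  For \<open>\<lambda>\<^sup>2\<sigma>\<^sup>2 \<le> 1\<close> use \<open>exp x \<le> x + exp x\<^sup>2\<close>, the zero mean, and \<open>E exp (p Y\<^sup>2/\<sigma>\<^sup>2) \<le> e\<^sup>p\<close> for
  \<open>p \<le> 1\<close>; otherwise use \<open>2\<lambda>Y \<le> \<lambda>\<^sup>2\<sigma>\<^sup>2 + Y\<^sup>2/\<sigma>\<^sup>2\<close> and \<open>p = 1/2\<close>.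
\<close>

lemma subgaussian_mgf_small_scale:
  fixes Q :: "'s measure" and Y :: "'s \<Rightarrow> real"
  assumes Q: "prob_space Q" and Ym: "Y \<in> borel_measurable Q" and Yi: "integrable Q Y"
    and Y0: "(\<integral>s. Y s \<partial>Q) = 0" and sig: "\<sigma> > 0"
    and int: "integrable Q (\<lambda>s. exp ((Y s)\<^sup>2 / \<sigma>\<^sup>2))" and le: "(\<integral>s. exp ((Y s)\<^sup>2 / \<sigma>\<^sup>2) \<partial>Q) \<le> exp 1"
    and small: "l\<^sup>2 * \<sigma>\<^sup>2 \<le> 1"
  shows "integrable Q (\<lambda>s. exp (l * Y s)) \<and> (\<integral>s. exp (l * Y s) \<partial>Q) \<le> exp (l\<^sup>2 * \<sigma>\<^sup>2)"
proof -
  interpret prob_space Q by (rule Q)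
  define p where "p = l\<^sup>2 * \<sigma>\<^sup>2"
  have p: "0 \<le> p" "p \<le> 1" using small unfolding p_def by auto
  have Wm: "(\<lambda>s. (Y s)\<^sup>2 / \<sigma>\<^sup>2) \<in> borel_measurable Q" using Ym by measurable
  note pb = exp_moment_power_bound[OF Q Wm int le p]
  have pt: "exp (l * Y s) \<le> l * Y s + exp (p * ((Y s)\<^sup>2 / \<sigma>\<^sup>2))" for s
    using exp_le_add_exp_square[of "l * Y s"] sig unfolding p_def by (simp add: power_mult_distrib)
  have ir: "integrable Q (\<lambda>s. \<bar>l * Y s\<bar> + exp (p * ((Y s)\<^sup>2 / \<sigma>\<^sup>2)))" using pb(1) Yi by auto
  have "exp (l * Y s) \<le> \<bar>l * Y s\<bar> + exp (p * ((Y s)\<^sup>2 / \<sigma>\<^sup>2))" for s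
    using pt[of s] abs_ge_self[of "l * Y s"] by linarith
  then have i: "integrable Q (\<lambda>s. exp (l * Y s))"
    by (intro Bochner_Integration.integrable_bound[OF ir]) (use Ym in \<open>auto intro!: always_eventually\<close>)
  have "(\<integral>s. exp (l * Y s) \<partial>Q) \<le> (\<integral>s. l * Y s + exp (p * ((Y s)\<^sup>2 / \<sigma>\<^sup>2)) \<partial>Q)"
    using pb(1) Yi by (intro integral_mono[OF i] pt) auto
  also have "\<dots> = l * (\<integral>s. Y s \<partial>Q) + (\<integral>s. exp (p * ((Y s)\<^sup>2 / \<sigma>\<^sup>2)) \<partial>Q)"
    using pb(1) Yi by simp
  also have "\<dots> \<le> exp p" using pb(2) Y0 by simp
  finally show ?thesis using i unfolding p_def by simp
qed

lemma subgaussian_mgf_large_scale: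
  fixes Q :: "'s measure" and Y :: "'s \<Rightarrow> real"
  assumes Q: "prob_space Q" and Ym: "Y \<in> borel_measurable Q" and sig: "\<sigma> > 0"
    and int: "integrable Q (\<lambda>s. exp ((Y s)\<^sup>2 / \<sigma>\<^sup>2))" and le: "(\<integral>s. exp ((Y s)\<^sup>2 / \<sigma>\<^sup>2) \<partial>Q) \<le> exp 1"
    and large: "l\<^sup>2 * \<sigma>\<^sup>2 \<ge> 1"
  shows "integrable Q (\<lambda>s. exp (l * Y s)) \<and> (\<integral>s. exp (l * Y s) \<partial>Q) \<le> exp (l\<^sup>2 * \<sigma>\<^sup>2)"
proof -
  interpret prob_space Q by (rule Q)
  have Wm: "(\<lambda>s. (Y s)\<^sup>2 / \<sigma>\<^sup>2) \<in> borel_measurable Q" using Ym by measurable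
  note pb = exp_moment_power_bound[OF Q Wm int le, of "1/2"]
  have pt: "exp (l * Y s) \<le> exp (l\<^sup>2 * \<sigma>\<^sup>2 / 2) * exp (1/2 * ((Y s)\<^sup>2 / \<sigma>\<^sup>2))" for s
  proof -
    have "0 \<le> (l * \<sigma> - Y s / \<sigma>)\<^sup>2" by simp
    then have "2 * (l * Y s) \<le> l\<^sup>2 * \<sigma>\<^sup>2 + (Y s)\<^sup>2 / \<sigma>\<^sup>2"
      using sig by (simp add: power2_eq_square field_simps)
    then show ?thesis by (simp flip: exp_add)
  qed
  have ir: "integrable Q (\<lambda>s. exp (l\<^sup>2 * \<sigma>\<^sup>2 / 2) * exp (1/2 * ((Y s)\<^sup>2 / \<sigma>\<^sup>2)))" using pb(1) by auto
  have i: "integrable Q (\<lambda>s. exp (l * Y s))"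
    by (rule Bochner_Integration.integrable_bound[OF ir]) (use Ym pt in \<open>auto intro!: always_eventually\<close>)
  have "(\<integral>s. exp (l * Y s) \<partial>Q) \<le> (\<integral>s. exp (l\<^sup>2 * \<sigma>\<^sup>2 / 2) * exp (1/2 * ((Y s)\<^sup>2 / \<sigma>\<^sup>2)) \<partial>Q)"
    by (intro integral_mono[OF i ir] pt)
  also have "\<dots> \<le> exp (l\<^sup>2 * \<sigma>\<^sup>2 / 2) * exp (1/2)" using pb(2) by (simp add: mult_left_mono)
  also have "\<dots> \<le> exp (l\<^sup>2 * \<sigma>\<^sup>2)" using large by (simp flip: exp_add)
  finally show ?thesis using i by simp
qed

lemma integral_le_of_nn_integral_le:
  fixes Q :: "'s measure"
  assumes fm: "f \<in> borel_measurable Q" and f0: "\<And>s. f s \<ge> 0"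
    and le: "(\<integral>\<^sup>+ s. ennreal (f s) \<partial>Q) \<le> ennreal c" and c: "c \<ge> 0"
  shows "integrable Q f" "(\<integral>s. f s \<partial>Q) \<le> c"
proof -
  have "(\<integral>\<^sup>+ s. ennreal (norm (f s)) \<partial>Q) < \<infinity>" using le f0 by (simp add: order_le_less_trans)
  thus i: "integrable Q f" by (rule integrableI_bounded[OF fm])
  have "ennreal (\<integral>s. f s \<partial>Q) = (\<integral>\<^sup>+ s. ennreal (f s) \<partial>Q)"
    by (rule nn_integral_eq_integral[symmetric, OF i]) (simp add: f0)
  hence "ennreal (\<integral>s. f s \<partial>Q) \<le> ennreal c" using le by simp
  thus "(\<integral>s. f s \<partial>Q) \<le> c" using c by (simp add: ennreal_le_iff)
qed

lemma subgaussian_nn_mgf: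
  fixes Q :: "'s measure" and Y :: "'s \<Rightarrow> real"
  assumes Q: "prob_space Q" and Ym: "Y \<in> borel_measurable Q" and Yi: "integrable Q Y"
    and Y0: "(\<integral>s. Y s \<partial>Q) = 0" and sig: "\<sigma> > 0"
    and le: "(\<integral>\<^sup>+ s. ennreal (exp ((Y s)\<^sup>2 / \<sigma>\<^sup>2)) \<partial>Q) \<le> ennreal (exp 1)"
  shows "(\<integral>\<^sup>+ s. ennreal (exp (l * Y s)) \<partial>Q) \<le> ennreal (exp (l\<^sup>2 * \<sigma>\<^sup>2))"
proof -
  have em: "(\<lambda>s. exp ((Y s)\<^sup>2 / \<sigma>\<^sup>2)) \<in> borel_measurable Q" using Ym by measurable
  have r: "integrable Q (\<lambda>s. exp ((Y s)\<^sup>2 / \<sigma>\<^sup>2))" "(\<integral>s. exp ((Y s)\<^sup>2 / \<sigma>\<^sup>2) \<partial>Q) \<le> exp 1"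
    using integral_le_of_nn_integral_le[OF em _ le] by auto
  have "integrable Q (\<lambda>s. exp (l * Y s)) \<and> (\<integral>s. exp (l * Y s) \<partial>Q) \<le> exp (l\<^sup>2 * \<sigma>\<^sup>2)"
    using subgaussian_mgf_small_scale[OF Q Ym Yi Y0 sig r, of l]
      subgaussian_mgf_large_scale[OF Q Ym sig r, of l] by linarith
  note sg = conjunct1[OF this] conjunct2[OF this]
  have "(\<integral>\<^sup>+ s. ennreal (exp (l * Y s)) \<partial>Q) = ennreal (\<integral>s. exp (l * Y s) \<partial>Q)"
    by (rule nn_integral_eq_integral[OF sg(1)]) auto
  also have "\<dots> \<le> ennreal (exp (l\<^sup>2 * \<sigma>\<^sup>2))" using sg(2) by (simp add: ennreal_leI)
  finally show ?thesis .
qed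

section \<open>Sums along adapted sample paths\<close>

lemma chernoff_bound:
  fixes M :: "'m measure"
  assumes Zm: "Z \<in> borel_measurable M" and l: "l \<ge> 0"
  shows "emeasure M {w \<in> space M. t \<le> Z w} \<le> ennreal (exp (- l * t)) * (\<integral>\<^sup>+ w. ennreal (exp (l * Z w)) \<partial>M)"
proof -
  have mset: "{w \<in> space M. t \<le> Z w} \<in> sets M" using Zm by measurable
  have "emeasure M {w \<in> space M. t \<le> Z w} = (\<integral>\<^sup>+ w. indicator {w \<in> space M. t \<le> Z w} w \<partial>M)"
    by (rule nn_integral_indicator[symmetric, OF mset])
  also have "\<dots> \<le> (\<integral>\<^sup>+ w. ennreal (exp (- l * t)) * ennreal (exp (l * Z w)) \<partial>M)"
  proof (rule nn_integral_mono)
    fix w assume w: "w \<in> space M"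
    show "indicator {w \<in> space M. t \<le> Z w} w \<le> ennreal (exp (- l * t)) * ennreal (exp (l * Z w))"
    proof (cases "t \<le> Z w")
      case True
      have "1 \<le> exp (- l * t + l * Z w)" using True l by (simp add: mult_left_mono algebra_simps)
      hence "ennreal 1 \<le> ennreal (exp (- l * t) * exp (l * Z w))" by (simp add: exp_add[symmetric])
      thus ?thesis using True w by (simp add: ennreal_mult)
    qed simp
  qed
  also have "\<dots> = ennreal (exp (- l * t)) * (\<integral>\<^sup>+ w. ennreal (exp (l * Z w)) \<partial>M)"
    by (rule nn_integral_cmult) (use Zm in measurable)
  finally show ?thesis .
qed

locale iid_samples =
  fixes M :: "'m measure" and S :: "'s measure" and \<xi> :: "nat \<Rightarrow> 'm \<Rightarrow> 's"
  assumes M_prob: "prob_space M"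
    and xi_measurable: "\<forall>t\<ge>1. \<xi> t \<in> measurable M S"
    and xi_indep: "prob_space.indep_vars M (\<lambda>_. S) \<xi> {1..}"
    and xi_identical: "\<forall>t\<ge>1. distr M S (\<xi> t) = distr M S (\<xi> 1)"
begin

abbreviation "Q \<equiv> distr M S (\<xi> 1)"
abbreviation "Past n \<equiv> PiM {1..n} (\<lambda>_. S)"
definition past :: "nat \<Rightarrow> 'm \<Rightarrow> nat \<Rightarrow> 's" where
  "past n w = restrict (\<lambda>i. \<xi> i w) {1..n}"

lemma prob_space_Q: "prob_space Q"
  using M_prob xi_measurable by (intro prob_space.prob_space_distr) auto

lemma measurable_past: "past n \<in> measurable M (Past n)"
  unfolding past_def using xi_measurable by (intro measurable_restrict) auto

abbreviation "next_sample n w \<equiv> restrict (\<lambda>i. \<xi> i w) {Suc n}"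

lemma indep_past_next: "prob_space.indep_var M (Past n) (past n) (PiM {Suc n} (\<lambda>_. S)) (next_sample n)"
  unfolding past_def by (rule prob_space.indep_var_restrict[OF M_prob xi_indep]) auto

lemma measurable_next_sample: "next_sample n \<in> measurable M (PiM {Suc n} (\<lambda>_. S))"
  using xi_measurable by (intro measurable_restrict) auto

lemma nn_integral_next_sample:
  assumes H: "H \<in> borel_measurable S"
  shows "(\<integral>\<^sup>+ b. H (b (Suc n)) \<partial>distr M (PiM {Suc n} (\<lambda>_. S)) (next_sample n)) = (\<integral>\<^sup>+ s. H s \<partial>Q)"
proof -
  have "(\<lambda>b. H (b (Suc n))) \<in> borel_measurable (PiM {Suc n} (\<lambda>_. S))"
    by (rule measurable_compose[OF measurable_component_singleton[of "Suc n" "{Suc n}" "\<lambda>_. S"] H]) simp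
  then have "(\<integral>\<^sup>+ b. H (b (Suc n)) \<partial>distr M (PiM {Suc n} (\<lambda>_. S)) (next_sample n))
      = (\<integral>\<^sup>+ w. H (\<xi> (Suc n) w) \<partial>M)"
    using nn_integral_distr[OF measurable_next_sample] measurable_cong_sets[OF sets_distr refl] by simp
  also have "\<dots> = (\<integral>\<^sup>+ s. H s \<partial>distr M S (\<xi> (Suc n)))"
  proof -
    have "H \<in> borel_measurable (distr M S (\<xi> (Suc n)))"
      using H measurable_cong_sets[OF sets_distr refl] by blast
    from nn_integral_distr[OF _ this] xi_measurable show ?thesis by simp
  qed
  also have "distr M S (\<xi> (Suc n)) = Q" by (rule xi_identical[rule_format]) simp
  finally show ?thesis .
qed

text \<open>The past and the next sample are independent, so their joint law is a product measure.\<close>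

lemma nn_integral_past_next:
  assumes F: "F \<in> borel_measurable (Past n \<Otimes>\<^sub>M S)"
  shows "(\<integral>\<^sup>+ w. F (past n w, \<xi> (Suc n) w) \<partial>M) = (\<integral>\<^sup>+ a. (\<integral>\<^sup>+ s. F (a, s) \<partial>Q) \<partial>distr M (Past n) (past n))"
proof -
  let ?D1 = "distr M (Past n) (past n)" and ?D2 = "distr M (PiM {Suc n} (\<lambda>_. S)) (next_sample n)"
  define F' where "F' p = F (fst p, snd p (Suc n))" for p :: "(nat \<Rightarrow> 's) \<times> (nat \<Rightarrow> 's)"
  have F'm: "F' \<in> borel_measurable (Past n \<Otimes>\<^sub>M PiM {Suc n} (\<lambda>_. S))"
  proof -
    have "(\<lambda>p. (fst p, snd p (Suc n))) \<in> measurable (Past n \<Otimes>\<^sub>M PiM {Suc n} (\<lambda>_. S)) (Past n \<Otimes>\<^sub>M S)"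
      by (intro measurable_Pair measurable_fst measurable_compose[OF measurable_snd measurable_component_singleton]) auto
    from measurable_compose[OF this F] show ?thesis unfolding F'_def .
  qed
  have eq: "?D1 \<Otimes>\<^sub>M ?D2 = distr M (Past n \<Otimes>\<^sub>M PiM {Suc n} (\<lambda>_. S)) (\<lambda>w. (past n w, next_sample n w))"
    using prob_space.indep_var_distribution_eq[OF M_prob, THEN iffD1, OF indep_past_next[of n]] by blast
  have pm: "(\<lambda>w. (past n w, next_sample n w)) \<in> measurable M (Past n \<Otimes>\<^sub>M PiM {Suc n} (\<lambda>_. S))"
    by (rule measurable_Pair[OF measurable_past measurable_next_sample])
  have "(\<integral>\<^sup>+ w. F (past n w, \<xi> (Suc n) w) \<partial>M) = (\<integral>\<^sup>+ w. F' (past n w, next_sample n w) \<partial>M)"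
    unfolding F'_def by simp
  also have "\<dots> = integral\<^sup>N (distr M (Past n \<Otimes>\<^sub>M PiM {Suc n} (\<lambda>_. S)) (\<lambda>w. (past n w, next_sample n w))) F'"
  proof -
    have "F' \<in> borel_measurable (distr M (Past n \<Otimes>\<^sub>M PiM {Suc n} (\<lambda>_. S)) (\<lambda>w. (past n w, next_sample n w)))"
      using F'm measurable_cong_sets[OF sets_distr refl] by blast
    from nn_integral_distr[OF pm this] show ?thesis by simp
  qed
  also have "\<dots> = integral\<^sup>N (?D1 \<Otimes>\<^sub>M ?D2) F'" using eq by simp
  also have "\<dots> = (\<integral>\<^sup>+ a. (\<integral>\<^sup>+ b. F' (a, b) \<partial>?D2) \<partial>?D1)"
  proof -
    interpret D2: prob_space ?D2 by (rule prob_space.prob_space_distr[OF M_prob measurable_next_sample])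
    have "sets (?D1 \<Otimes>\<^sub>M ?D2) = sets (Past n \<Otimes>\<^sub>M PiM {Suc n} (\<lambda>_. S))"
      by (intro sets_pair_measure_cong sets_distr)
    hence "F' \<in> borel_measurable (?D1 \<Otimes>\<^sub>M ?D2)" using F'm measurable_cong_sets[of "?D1 \<Otimes>\<^sub>M ?D2" "Past n \<Otimes>\<^sub>M PiM {Suc n} (\<lambda>_. S)" borel borel] by simp
    thus ?thesis by (rule D2.nn_integral_fst[symmetric])
  qed
  also have "\<dots> = (\<integral>\<^sup>+ a. (\<integral>\<^sup>+ s. F (a, s) \<partial>Q) \<partial>?D1)"
  proof (rule nn_integral_cong)
    fix a assume "a \<in> space ?D1"
    then have "(\<lambda>s. F (a, s)) \<in> borel_measurable S" using measurable_Pair2[OF F] by simp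
    from nn_integral_next_sample[OF this, of n]
    show "(\<integral>\<^sup>+ b. F' (a, b) \<partial>?D2) = (\<integral>\<^sup>+ s. F (a, s) \<partial>Q)" unfolding F'_def by simp
  qed
  finally show ?thesis .
qed

end

locale adapted_points = iid_samples M S \<xi> for M :: "'m measure" and S :: "'s measure" and \<xi> +
  fixes pt :: "nat \<Rightarrow> (nat \<Rightarrow> 's) \<Rightarrow> 'a::topological_space" and Pts :: "'a set"
  assumes pt_prefix: "\<And>t ss ss'. (\<forall>i\<in>{1..<t}. ss i = ss' i) \<Longrightarrow> pt t ss = pt t ss'"
    and measurable_pt: "\<And>t n. t \<le> Suc n \<Longrightarrow> pt t \<in> borel_measurable (PiM {1..n} (\<lambda>_. S))"
    and pt_in: "\<And>t ss. pt t ss \<in> Pts"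
begin

definition path_sum :: "('a \<Rightarrow> 's \<Rightarrow> real) \<Rightarrow> nat \<Rightarrow> (nat \<Rightarrow> 's) \<Rightarrow> real" where
  "path_sum \<phi> n ss = (\<Sum>\<tau>\<in>{1..n}. \<phi> (pt \<tau> ss) (ss \<tau>))"

lemma path_sum_prefix: "(\<forall>i\<in>{1..n}. ss i = ss' i) \<Longrightarrow> path_sum \<phi> n ss = path_sum \<phi> n ss'"
  unfolding path_sum_def
proof (rule sum.cong[OF refl])
  fix \<tau> assume a: "\<forall>i\<in>{1..n}. ss i = ss' i" and t: "\<tau> \<in> {1..n}"
  have "pt \<tau> ss = pt \<tau> ss'" using a t by (intro pt_prefix) auto
  moreover have "ss \<tau> = ss' \<tau>" using a t by auto
  ultimately show "\<phi> (pt \<tau> ss) (ss \<tau>) = \<phi> (pt \<tau> ss') (ss' \<tau>)" by simp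
qed

lemma path_sum_past: "path_sum \<phi> n (\<lambda>i. \<xi> i w) = path_sum \<phi> n (past n w)"
  by (rule path_sum_prefix) (auto simp: past_def)

lemma pt_past: "t \<le> Suc n \<Longrightarrow> pt t (\<lambda>i. \<xi> i w) = pt t (past n w)"
  by (rule pt_prefix) (auto simp: past_def)

lemma measurable_pt_pair:
  assumes \<phi>m: "(\<lambda>(x, s). \<phi> x s) \<in> borel_measurable (borel \<Otimes>\<^sub>M S)"
    and t: "t \<le> Suc n" and h: "h \<in> measurable (Past n) S"
  shows "(\<lambda>a. \<phi> (pt t a) (h a)) \<in> borel_measurable (Past n)"
proof -
  have "(\<lambda>a. (pt t a, h a)) \<in> measurable (Past n) (borel \<Otimes>\<^sub>M S)"
    by (rule measurable_Pair[OF measurable_pt[OF t] h])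
  from measurable_compose[OF this \<phi>m] show ?thesis by simp
qed

lemma measurable_path_sum:
  assumes \<phi>m: "(\<lambda>(x, s). \<phi> x s) \<in> borel_measurable (borel \<Otimes>\<^sub>M S)"
  shows "path_sum \<phi> n \<in> borel_measurable (Past n)"
proof -
  have "(\<lambda>a. \<phi> (pt \<tau> a) (a \<tau>)) \<in> borel_measurable (Past n)" if "\<tau> \<in> {1..n}" for \<tau>
    using that by (intro measurable_pt_pair[OF \<phi>m] measurable_component_singleton) auto
  hence "(\<lambda>a. \<Sum>\<tau>\<in>{1..n}. \<phi> (pt \<tau> a) (a \<tau>)) \<in> borel_measurable (Past n)"
    by (rule borel_measurable_sum)
  thus ?thesis unfolding path_sum_def[abs_def] .
qed

lemma measurable_path_sum_samples:
  assumes \<phi>m: "(\<lambda>(x, s). \<phi> x s) \<in> borel_measurable (borel \<Otimes>\<^sub>M S)"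
  shows "(\<lambda>w. path_sum \<phi> n (\<lambda>i. \<xi> i w)) \<in> borel_measurable M"
  unfolding path_sum_past by (rule measurable_compose[OF measurable_past measurable_path_sum[OF \<phi>m]])

lemma measurable_pt_samples: "(\<lambda>w. pt t (\<lambda>i. \<xi> i w)) \<in> borel_measurable M"
proof -
  have "(\<lambda>w. pt t (past t w)) \<in> borel_measurable M"
    by (rule measurable_compose[OF measurable_past measurable_pt]) simp
  moreover have "pt t (\<lambda>i. \<xi> i w) = pt t (past t w)" for w by (rule pt_past) simp
  ultimately show ?thesis by simp
qed

lemma nn_integral_exp_path_sum_Suc:
  assumes \<phi>m: "(\<lambda>(x, s). \<phi> x s) \<in> borel_measurable (borel \<Otimes>\<^sub>M S)"
  shows "(\<integral>\<^sup>+ w. ennreal (exp (l * path_sum \<phi> (Suc n) (\<lambda>i. \<xi> i w))) \<partial>M)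
    = (\<integral>\<^sup>+ a. ennreal (exp (l * path_sum \<phi> n a)) * (\<integral>\<^sup>+ s. ennreal (exp (l * \<phi> (pt (Suc n) a) s)) \<partial>Q)
        \<partial>distr M (Past n) (past n))"
proof -
  define F where "F p = ennreal (exp (l * path_sum \<phi> n (fst p))) * ennreal (exp (l * \<phi> (pt (Suc n) (fst p)) (snd p)))"
    for p :: "(nat \<Rightarrow> 's) \<times> 's"
  have "(\<lambda>p. (pt (Suc n) (fst p), snd p)) \<in> measurable (Past n \<Otimes>\<^sub>M S) (borel \<Otimes>\<^sub>M S)"
    by (intro measurable_Pair measurable_compose[OF measurable_fst measurable_pt] measurable_snd) simp
  from measurable_compose[OF this \<phi>m]
  have m2: "(\<lambda>p. \<phi> (pt (Suc n) (fst p)) (snd p)) \<in> borel_measurable (Past n \<Otimes>\<^sub>M S)" by simp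
  have Fm: "F \<in> borel_measurable (Past n \<Otimes>\<^sub>M S)"
    unfolding F_def[abs_def] using measurable_compose[OF measurable_fst measurable_path_sum[OF \<phi>m]] m2
    by measurable
  have "path_sum \<phi> (Suc n) (\<lambda>i. \<xi> i w) = path_sum \<phi> n (past n w) + \<phi> (pt (Suc n) (past n w)) (\<xi> (Suc n) w)" for w
    using path_sum_past pt_past[of "Suc n" n] by (simp add: path_sum_def)
  then have "(\<integral>\<^sup>+ w. ennreal (exp (l * path_sum \<phi> (Suc n) (\<lambda>i. \<xi> i w))) \<partial>M)
      = (\<integral>\<^sup>+ w. F (past n w, \<xi> (Suc n) w) \<partial>M)"
    unfolding F_def by (simp add: distrib_left exp_add ennreal_mult)
  also have "\<dots> = (\<integral>\<^sup>+ a. (\<integral>\<^sup>+ s. F (a, s) \<partial>Q) \<partial>distr M (Past n) (past n))"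
    by (rule nn_integral_past_next[OF Fm])
  also have "\<dots> = (\<integral>\<^sup>+ a. ennreal (exp (l * path_sum \<phi> n a)) * (\<integral>\<^sup>+ s. ennreal (exp (l * \<phi> (pt (Suc n) a) s)) \<partial>Q)
      \<partial>distr M (Past n) (past n))"
  proof (rule nn_integral_cong)
    fix a assume a: "a \<in> space (distr M (Past n) (past n))"
    have "(\<lambda>s. ennreal (exp (l * \<phi> (pt (Suc n) a) s))) \<in> borel_measurable S"
      using measurable_Pair2[OF m2] a by simp
    then have "(\<lambda>s. ennreal (exp (l * \<phi> (pt (Suc n) a) s))) \<in> borel_measurable Q"
      using measurable_cong_sets[OF sets_distr refl] by blast
    from nn_integral_cmult[OF this] show "(\<integral>\<^sup>+ s. F (a, s) \<partial>Q)
        = ennreal (exp (l * path_sum \<phi> n a)) * (\<integral>\<^sup>+ s. ennreal (exp (l * \<phi> (pt (Suc n) a) s)) \<partial>Q)"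
      unfolding F_def by simp
  qed
  finally show ?thesis .
qed

lemma nn_integral_exp_path_sum_le:
  assumes \<phi>m: "(\<lambda>(x, s). \<phi> x s) \<in> borel_measurable (borel \<Otimes>\<^sub>M S)"
    and bnd: "\<And>x. x \<in> Pts \<Longrightarrow> (\<integral>\<^sup>+ s. ennreal (exp (l * \<phi> x s)) \<partial>Q) \<le> ennreal B"
    and B: "B \<ge> 0"
  shows "(\<integral>\<^sup>+ w. ennreal (exp (l * path_sum \<phi> n (\<lambda>i. \<xi> i w))) \<partial>M) \<le> ennreal (B ^ n)"
proof (induction n)
  case 0
  then show ?case using prob_space.emeasure_space_1[OF M_prob] by (simp add: path_sum_def)
next
  case (Suc n)
  let ?D = "distr M (Past n) (past n)"
  have m: "(\<lambda>a. ennreal (exp (l * path_sum \<phi> n a))) \<in> borel_measurable (Past n)"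
    using measurable_path_sum[OF \<phi>m, of n] by measurable
  have "(\<integral>\<^sup>+ w. ennreal (exp (l * path_sum \<phi> (Suc n) (\<lambda>i. \<xi> i w))) \<partial>M)
      \<le> (\<integral>\<^sup>+ a. ennreal (exp (l * path_sum \<phi> n a)) * ennreal B \<partial>?D)"
    unfolding nn_integral_exp_path_sum_Suc[OF \<phi>m] by (intro nn_integral_mono mult_left_mono bnd pt_in) simp
  also have "\<dots> = ennreal B * (\<integral>\<^sup>+ a. ennreal (exp (l * path_sum \<phi> n a)) \<partial>?D)"
  proof -
    have "(\<lambda>a. ennreal (exp (l * path_sum \<phi> n a))) \<in> borel_measurable ?D"
      using m measurable_cong_sets[OF sets_distr refl] by blast
    from nn_integral_multc[OF this] show ?thesis by (simp add: mult.commute)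
  qed
  also have "(\<integral>\<^sup>+ a. ennreal (exp (l * path_sum \<phi> n a)) \<partial>?D)
      = (\<integral>\<^sup>+ w. ennreal (exp (l * path_sum \<phi> n (\<lambda>i. \<xi> i w))) \<partial>M)"
    using nn_integral_distr[OF measurable_past] m measurable_cong_sets[OF sets_distr refl] path_sum_past
    by simp
  also have "ennreal B * \<dots> \<le> ennreal B * ennreal (B ^ n)" by (intro mult_left_mono Suc.IH) simp
  also have "\<dots> = ennreal (B ^ Suc n)" using B by (simp add: ennreal_mult[symmetric])
  finally show ?case .
qed

lemma null_path_event:
  assumes Bad: "Bad \<in> sets (borel \<Otimes>\<^sub>M S)"
    and ae: "\<And>x. x \<in> Pts \<Longrightarrow> AE s in Q. (x, s) \<notin> Bad"
  shows "emeasure M {w \<in> space M. (pt (Suc n) (\<lambda>i. \<xi> i w), \<xi> (Suc n) w) \<in> Bad} = 0"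
proof -
  let ?D1 = "distr M (Past n) (past n)"
  define F where "F p = (indicator Bad (pt (Suc n) (fst p), snd p) :: ennreal)" for p :: "(nat \<Rightarrow> 's) \<times> 's"
  have pm: "(\<lambda>p. (pt (Suc n) (fst p), snd p)) \<in> measurable (Past n \<Otimes>\<^sub>M S) (borel \<Otimes>\<^sub>M S)"
    by (intro measurable_Pair measurable_compose[OF measurable_fst measurable_pt] measurable_snd) simp
  have Fm: "F \<in> borel_measurable (Past n \<Otimes>\<^sub>M S)"
    unfolding F_def by (rule measurable_compose[OF pm borel_measurable_indicator[OF Bad]])
  have mset: "{w \<in> space M. (pt (Suc n) (\<lambda>i. \<xi> i w), \<xi> (Suc n) w) \<in> Bad} \<in> sets M"
  proof -
    have "(\<lambda>w. (pt (Suc n) (\<lambda>i. \<xi> i w), \<xi> (Suc n) w)) \<in> measurable M (borel \<Otimes>\<^sub>M S)"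
      using xi_measurable by (intro measurable_Pair measurable_pt_samples) auto
    from measurable_sets[OF this Bad] show ?thesis by (simp add: vimage_def Int_def conj_commute)
  qed
  have "emeasure M {w \<in> space M. (pt (Suc n) (\<lambda>i. \<xi> i w), \<xi> (Suc n) w) \<in> Bad}
      = (\<integral>\<^sup>+ w. indicator {w \<in> space M. (pt (Suc n) (\<lambda>i. \<xi> i w), \<xi> (Suc n) w) \<in> Bad} w \<partial>M)"
    by (rule nn_integral_indicator[symmetric, OF mset])
  also have "\<dots> = (\<integral>\<^sup>+ w. F (past n w, \<xi> (Suc n) w) \<partial>M)"
    by (intro nn_integral_cong) (auto simp: F_def pt_past[of "Suc n" n] indicator_def)
  also have "\<dots> = (\<integral>\<^sup>+ a. (\<integral>\<^sup>+ s. F (a, s) \<partial>Q) \<partial>?D1)" by (rule nn_integral_past_next[OF Fm])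
  also have "\<dots> = (\<integral>\<^sup>+ a. 0 \<partial>?D1)"
  proof (rule nn_integral_cong)
    fix a assume a: "a \<in> space ?D1"
    have "AE s in Q. F (a, s) = 0" using ae[OF pt_in[of "Suc n" a]] by eventually_elim (simp add: F_def)
    hence "(\<integral>\<^sup>+ s. F (a, s) \<partial>Q) = (\<integral>\<^sup>+ s. 0 \<partial>Q)" by (rule nn_integral_cong_AE)
    thus "(\<integral>\<^sup>+ s. F (a, s) \<partial>Q) = 0" by simp
  qed
  finally show ?thesis by simp
qed

lemma path_sum_tail:
  assumes \<phi>m: "(\<lambda>(x, s). \<phi> x s) \<in> borel_measurable (borel \<Otimes>\<^sub>M S)"
    and sig: "\<sigma> > 0" and n: "n \<ge> 1" and Th: "\<Theta> \<ge> 0"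
    and mgf: "\<And>x l. x \<in> Pts \<Longrightarrow> (\<integral>\<^sup>+ s. ennreal (exp (l * \<phi> x s)) \<partial>Q) \<le> ennreal (exp (l\<^sup>2 * \<sigma>\<^sup>2))"
  shows "measure M {w \<in> space M. \<Theta> * \<sigma> * sqrt n \<le> path_sum \<phi> n (\<lambda>i. \<xi> i w)} \<le> exp (- \<Theta>\<^sup>2 / 4)"
proof -
  define q where "q = sqrt (real n)"
  have q: "q > 0" "q\<^sup>2 = real n" unfolding q_def using n by auto
  define l where "l = \<Theta> / (2 * \<sigma> * q)"
  have l: "l \<ge> 0" unfolding l_def using Th sig q by simp
  let ?t = "\<Theta> * \<sigma> * q"
  have "emeasure M {w \<in> space M. ?t \<le> path_sum \<phi> n (\<lambda>i. \<xi> i w)}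
      \<le> ennreal (exp (- l * ?t)) * (\<integral>\<^sup>+ w. ennreal (exp (l * path_sum \<phi> n (\<lambda>i. \<xi> i w))) \<partial>M)"
    by (rule chernoff_bound[OF measurable_path_sum_samples[OF \<phi>m] l])
  also have "\<dots> \<le> ennreal (exp (- l * ?t)) * ennreal (exp (l\<^sup>2 * \<sigma>\<^sup>2) ^ n)"
    by (intro mult_left_mono nn_integral_exp_path_sum_le[OF \<phi>m mgf]) auto
  also have "\<dots> = ennreal (exp (- l * ?t + real n * (l\<^sup>2 * \<sigma>\<^sup>2)))"
  proof -
    have "exp (l\<^sup>2 * \<sigma>\<^sup>2) ^ n = exp (real n * (l\<^sup>2 * \<sigma>\<^sup>2))" by (rule exp_of_nat_mult[symmetric])
    hence "exp (- l * ?t) * exp (l\<^sup>2 * \<sigma>\<^sup>2) ^ n = exp (- l * ?t + real n * (l\<^sup>2 * \<sigma>\<^sup>2))"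
      by (simp add: exp_add[symmetric])
    thus ?thesis by (simp add: ennreal_mult[symmetric])
  qed
  also have "- l * ?t + real n * (l\<^sup>2 * \<sigma>\<^sup>2) = - \<Theta>\<^sup>2 / 4"
    unfolding l_def q(2)[symmetric] using sig q(1) by (simp add: field_simps power2_eq_square)
  finally have "emeasure M {w \<in> space M. ?t \<le> path_sum \<phi> n (\<lambda>i. \<xi> i w)} \<le> ennreal (exp (- \<Theta>\<^sup>2 / 4))" .
  from enn2real_mono[OF this] show ?thesis unfolding measure_def q_def by simp
qed

end

text \<open>
  With \<open>q = \<surd>N\<close> and the stepsize \<open>\<gamma>\<close> of the theorem, the regret bound
  \<open>D\<^sup>2/(2\<gamma>) + \<gamma>/(2\<mu>) N (L + M\<^sub>2)\<^sup>2\<close> is at most \<open>\<surd>N\<close> times the constant of \<open>K\<^sub>1\<close> and \<open>K\<^sub>2\<close>, since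
  \<open>(L + M\<^sub>2)\<^sup>2 \<le> 2 (M\<^sub>2\<^sup>2 + L\<^sup>2)\<close>.
\<close>

lemma smd_stepsize_regret_arith:
  fixes D \<mu> M2 L q :: real
  assumes D: "D > 0" and mu: "\<mu> > 0" and M2: "M2 \<ge> 0" and L: "L \<ge> 0" and A: "M2\<^sup>2 + L\<^sup>2 > 0" and q: "q > 0"
  shows "D\<^sup>2 / (2 * (D * sqrt \<mu> / (sqrt (2 * (M2\<^sup>2 + L\<^sup>2)) * q)))
      + (D * sqrt \<mu> / (sqrt (2 * (M2\<^sup>2 + L\<^sup>2)) * q)) / (2 * \<mu>) * (q\<^sup>2 * (L + M2)\<^sup>2)
    \<le> q * (D * (M2\<^sup>2 + 2 * L\<^sup>2) / sqrt (2 * (M2\<^sup>2 + L\<^sup>2) * \<mu>) + D * M2\<^sup>2 / sqrt (2 * (M2\<^sup>2 + L\<^sup>2) * \<mu>))"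
proof -
  define r where "r = sqrt (2 * (M2\<^sup>2 + L\<^sup>2))"
  define m where "m = sqrt \<mu>"
  have r: "r > 0" "r\<^sup>2 = 2 * (M2\<^sup>2 + L\<^sup>2)" unfolding r_def using A by auto
  have m: "m > 0" "m\<^sup>2 = \<mu>" unfolding m_def using mu by auto
  have rm: "sqrt (2 * (M2\<^sup>2 + L\<^sup>2) * \<mu>) = r * m" unfolding r_def m_def by (simp add: real_sqrt_mult)
  have sq: "(L + M2)\<^sup>2 \<le> r\<^sup>2"
  proof -
    have "0 \<le> (L - M2)\<^sup>2" by simp
    thus ?thesis unfolding r(2) by (simp add: power2_eq_square algebra_simps)
  qed
  have lhs: "D\<^sup>2 / (2 * (D * m / (r * q))) + (D * m / (r * q)) / (2 * \<mu>) * (q\<^sup>2 * (L + M2)\<^sup>2)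
      = D * q * (r\<^sup>2 + (L + M2)\<^sup>2) / (2 * r * m)"
    unfolding m(2)[symmetric] using D r(1) m(1) q by (simp add: field_simps power2_eq_square)
  have rhs: "q * (D * (M2\<^sup>2 + 2 * L\<^sup>2) / (r * m) + D * M2\<^sup>2 / (r * m)) = D * q * (2 * r\<^sup>2) / (2 * r * m)"
    using r m by (simp add: field_simps)
  have "D * q * (r\<^sup>2 + (L + M2)\<^sup>2) \<le> D * q * (2 * r\<^sup>2)"
    using sq D q by (intro mult_left_mono) auto
  hence "D * q * (r\<^sup>2 + (L + M2)\<^sup>2) / (2 * r * m) \<le> D * q * (2 * r\<^sup>2) / (2 * r * m)"
    using r m by (intro divide_right_mono) auto
  thus ?thesis using lhs rhs unfolding rm r_def[symmetric] m_def[symmetric] by simp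
qed

section \<open>Confidence interval for the optimal value\<close>

locale smd_problem =
  distance_generating nrm X \<omega> \<omega>' \<mu> + iid_samples M S \<xi>
  for nrm :: "'a::euclidean_space \<Rightarrow> real" and X \<omega> \<omega>' \<mu>
    and M :: "'m measure" and S :: "'s measure" and \<xi> +
  fixes g :: "'a \<Rightarrow> 's \<Rightarrow> real" and G :: "'a \<Rightarrow> 's \<Rightarrow> 'a"
    and f :: "'a \<Rightarrow> real" and f' :: "'a \<Rightarrow> 'a"
    and L M1 M2 :: real and N :: nat and x_star :: 'a
  assumes g_measurable: "(\<lambda>(x, s). g x s) \<in> borel_measurable (borel \<Otimes>\<^sub>M S)"
    and G_measurable: "(\<lambda>(x, s). G x s) \<in> borel_measurable (borel \<Otimes>\<^sub>M S)"
    and g_integrable: "\<forall>x\<in>X. integrable (distr M S (\<xi> 1)) (g x)"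
    and G_integrable: "\<forall>x\<in>X. integrable (distr M S (\<xi> 1)) (G x)"
    and f_eq: "\<forall>x\<in>X. f x = (\<integral>s. g x s \<partial>distr M S (\<xi> 1))"
    and f'_eq: "\<forall>x\<in>X. f' x = (\<integral>s. G x s \<partial>distr M S (\<xi> 1))"
    and x_star: "x_star \<in> X" "\<forall>x\<in>X. f x_star \<le> f x"
    and f'_bounded: "\<forall>x\<in>X. dual_norm nrm (f' x) \<le> L"
    and f'_subgradient: "\<forall>x\<in>X. \<forall>y\<in>X. f y \<ge> f x + f' x \<bullet> (y - x)"
    and value_noise_exp_square: "\<forall>x\<in>X. (\<integral>\<^sup>+s. ennreal (exp ((g x s - f x)\<^sup>2 / M1\<^sup>2)) \<partial>distr M S (\<xi> 1))
                     \<le> ennreal (exp 1)"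
    and gradient_noise_bounded: "\<forall>x\<in>X. AE s in distr M S (\<xi> 1). dual_norm nrm (G x s - f' x) \<le> M2"
    and M1_pos: "M1 > 0" and M2_nonneg: "M2 \<ge> 0" and L_nonneg: "L \<ge> 0" and M2_L_pos: "M2\<^sup>2 + L\<^sup>2 > 0"
    and N_pos: "N \<ge> 1"
begin

definition D :: real where "D = D_omega \<omega> X"

definition iterate :: "nat \<Rightarrow> (nat \<Rightarrow> 's) \<Rightarrow> 'a" where
  "iterate t ss = smd_x (smd_stepsize D \<mu> M2 L N) G ss t"

definition avg_g :: "(nat \<Rightarrow> 's) \<Rightarrow> real" where
  "avg_g ss = (\<Sum>\<tau>=1..N. g (iterate \<tau> ss) (ss \<tau>)) / real N"

text \<open>
  The means are taken as integrals on all of the space, not via \<open>f\<close>, \<open>f'\<close>, which are only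
  specified on \<open>X\<close>; this makes the noises jointly measurable.
\<close>

definition mean_g :: "'a \<Rightarrow> real" where "mean_g x = (\<integral>s. g x s \<partial>Q)"

definition mean_G :: "'a \<Rightarrow> 'a" where "mean_G x = (\<integral>s. G x s \<partial>Q)"

definition value_noise :: "'a \<Rightarrow> 's \<Rightarrow> real" where "value_noise x s = g x s - mean_g x"

definition gradient_noise :: "'a \<Rightarrow> 's \<Rightarrow> real" where
  "gradient_noise x s = - ((G x s - mean_G x) \<bullet> (x - x_star))"

definition gradient_noise_bound :: real where "gradient_noise_bound = 2 * D * M2 / sqrt \<mu>"

definition regret_rate :: real where
  "regret_rate = K1 D \<mu> M2 L + D * M2\<^sup>2 / sqrt (2 * (M2\<^sup>2 + L\<^sup>2) * \<mu>)"

definition good_sample :: "'a \<Rightarrow> 's \<Rightarrow> bool" where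
  "good_sample x s \<longleftrightarrow> dual_norm nrm (G x s - mean_G x) \<le> M2"

sublocale path: adapted_points M S \<xi> iterate X
proof
  show "iterate t ss = iterate t ss'" if "\<forall>i\<in>{1..<t}. ss i = ss' i" for t ss ss'
    unfolding iterate_def using that by (rule smd_iter_prefix)
  show "iterate t \<in> borel_measurable (PiM {1..n} (\<lambda>_. S))" if "t \<le> Suc n" for t n
    unfolding iterate_def[abs_def] using measurable_smd_x[OF G_measurable that] .
  show "iterate t ss \<in> X" for t ss
    unfolding iterate_def by (rule smd_x_in_X)
qed

lemma mean_g_eq: "x \<in> X \<Longrightarrow> mean_g x = f x"
  using f_eq by (simp add: mean_g_def)

lemma mean_G_eq: "x \<in> X \<Longrightarrow> mean_G x = f' x"
  using f'_eq by (simp add: mean_G_def)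

lemma D_nonneg: "D \<ge> 0"
  unfolding D_def by (rule D_omega_nonneg)

lemma gradient_noise_bound_nonneg: "gradient_noise_bound \<ge> 0"
  unfolding gradient_noise_bound_def using D_nonneg mu_pos M2_nonneg by simp

lemma sets_borel_Q: "sets (borel \<Otimes>\<^sub>M Q) = sets (borel \<Otimes>\<^sub>M S)"
  by (intro sets_pair_measure_cong sets_distr refl)

lemma measurable_mean_G: "mean_G \<in> borel_measurable borel"
proof -
  interpret Q: prob_space Q by (rule prob_space_Q)
  have "(\<lambda>(x, s). G x s) \<in> borel_measurable (borel \<Otimes>\<^sub>M Q)"
    using G_measurable measurable_cong_sets[OF sets_borel_Q refl] by blast
  then show ?thesis unfolding mean_G_def by (rule Q.borel_measurable_lebesgue_integral)
qed

lemma measurable_value_noise: "(\<lambda>(x, s). value_noise x s) \<in> borel_measurable (borel \<Otimes>\<^sub>M S)"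
proof -
  interpret Q: prob_space Q by (rule prob_space_Q)
  have "(\<lambda>(x, s). g x s) \<in> borel_measurable (borel \<Otimes>\<^sub>M Q)"
    using g_measurable measurable_cong_sets[OF sets_borel_Q refl] by blast
  then have "mean_g \<in> borel_measurable borel"
    unfolding mean_g_def by (rule Q.borel_measurable_lebesgue_integral)
  moreover have "(\<lambda>(x, s). value_noise x s) = (\<lambda>p. (\<lambda>(x, s). g x s) p - mean_g (fst p))"
    by (auto simp: value_noise_def fun_eq_iff)
  ultimately show ?thesis using g_measurable by simp
qed

lemma measurable_neg_value_noise:
  "(\<lambda>(x, s). - value_noise x s) \<in> borel_measurable (borel \<Otimes>\<^sub>M S)"
  using borel_measurable_uminus[OF measurable_value_noise] by (simp add: case_prod_beta')

lemma measurable_centered_G: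
  "(\<lambda>p. G (fst p) (snd p) - mean_G (fst p)) \<in> borel_measurable (borel \<Otimes>\<^sub>M S)"
proof -
  have "(\<lambda>p. G (fst p) (snd p) - mean_G (fst p)) = (\<lambda>p. (\<lambda>(x, s). G x s) p - mean_G (fst p))"
    by (auto simp: fun_eq_iff)
  then show ?thesis
    using borel_measurable_diff[OF G_measurable measurable_compose[OF measurable_fst measurable_mean_G]] by simp
qed

lemma measurable_gradient_noise: "(\<lambda>(x, s). gradient_noise x s) \<in> borel_measurable (borel \<Otimes>\<^sub>M S)"
proof -
  have "(\<lambda>(x, s). gradient_noise x s) = (\<lambda>p. - ((G (fst p) (snd p) - mean_G (fst p)) \<bullet> (fst p - x_star)))"
    by (auto simp: gradient_noise_def fun_eq_iff)
  then show ?thesis using measurable_centered_G by simp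
qed

lemma sets_good_sample: "{p \<in> space (borel \<Otimes>\<^sub>M S). \<not> good_sample (fst p) (snd p)} \<in> sets (borel \<Otimes>\<^sub>M S)"
proof -
  have "dual_norm nrm \<in> borel_measurable borel"
    by (rule borel_measurable_continuous_onI[OF continuous_on_dual_norm[OF nrm_norm]])
  from measurable_compose[OF measurable_centered_G this]
  show ?thesis unfolding good_sample_def by measurable
qed

lemma measurable_section_Q:
  assumes "(\<lambda>(x, s). \<phi> x s) \<in> borel_measurable (borel \<Otimes>\<^sub>M S)"
  shows "\<phi> x \<in> borel_measurable Q"
proof -
  have "(\<lambda>(x, s). \<phi> x s) \<in> borel_measurable (borel \<Otimes>\<^sub>M Q)"
    using assms measurable_cong_sets[OF sets_borel_Q refl] by blast
  from measurable_Pair2[OF this, of x] show ?thesis by simp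
qed

lemma value_noise_mgf:
  assumes x: "x \<in> X"
  shows "(\<integral>\<^sup>+ s. ennreal (exp (l * value_noise x s)) \<partial>Q) \<le> ennreal (exp (l\<^sup>2 * M1\<^sup>2))"
proof (rule subgaussian_nn_mgf[OF prob_space_Q measurable_section_Q[OF measurable_value_noise] _ _ M1_pos])
  interpret Q: prob_space Q by (rule prob_space_Q)
  have gi: "integrable Q (g x)" using g_integrable x by simp
  then show "integrable Q (value_noise x)"
    unfolding value_noise_def[abs_def] by (intro Bochner_Integration.integrable_diff Q.integrable_const)
  show "(\<integral>s. value_noise x s \<partial>Q) = 0"
    unfolding value_noise_def Bochner_Integration.integral_diff[OF gi Q.integrable_const]
    using Q.prob_space by (simp add: mean_g_def)
  show "(\<integral>\<^sup>+ s. ennreal (exp ((value_noise x s)\<^sup>2 / M1\<^sup>2)) \<partial>Q) \<le> ennreal (exp 1)"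
    using value_noise_exp_square x unfolding value_noise_def mean_g_eq[OF x] by blast
qed

lemma neg_value_noise_mgf:
  "x \<in> X \<Longrightarrow> (\<integral>\<^sup>+ s. ennreal (exp (l * - value_noise x s)) \<partial>Q) \<le> ennreal (exp (l\<^sup>2 * M1\<^sup>2))"
  using value_noise_mgf[of x "- l"] by simp

lemma nrm_minus_x_star_le: "x \<in> X \<Longrightarrow> nrm (x - x_star) \<le> 2 * D / sqrt \<mu>"
  using is_norm_diff_triangle[OF nrm_norm, of x x_star "prox_argmin 0"]
    is_norm_minus_commute[OF nrm_norm, of "prox_argmin 0" x_star]
    nrm_prox_center_le[of x] nrm_prox_center_le[OF x_star(1)]
  unfolding D_def by linarith

lemma abs_gradient_noise_le:
  assumes x: "x \<in> X" and s: "good_sample x s"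
  shows "\<bar>gradient_noise x s\<bar> \<le> gradient_noise_bound"
proof -
  have "\<bar>gradient_noise x s\<bar> \<le> dual_norm nrm (G x s - mean_G x) * nrm (x - x_star)"
    unfolding gradient_noise_def using abs_inner_le_dual_norm[OF nrm_norm] by simp
  also have "\<dots> \<le> M2 * (2 * D / sqrt \<mu>)"
    using s nrm_minus_x_star_le[OF x] is_norm_nonneg[OF nrm_norm] M2_nonneg
    unfolding good_sample_def by (intro mult_mono) auto
  finally show ?thesis unfolding gradient_noise_bound_def by (simp add: mult_ac)
qed

lemma AE_good_sample: "x \<in> X \<Longrightarrow> AE s in Q. good_sample x s"
  using gradient_noise_bounded by (auto simp: good_sample_def mean_G_eq)

lemma gradient_noise_mgf:
  assumes x: "x \<in> X" and c: "gradient_noise_bound > 0"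
  shows "(\<integral>\<^sup>+ s. ennreal (exp (l * gradient_noise x s)) \<partial>Q) \<le> ennreal (exp (l\<^sup>2 * gradient_noise_bound\<^sup>2))"
proof (rule subgaussian_nn_mgf[OF prob_space_Q measurable_section_Q[OF measurable_gradient_noise] _ _ c])
  interpret Q: prob_space Q by (rule prob_space_Q)
  have Gi: "integrable Q (G x)" using G_integrable x by simp
  then have int: "integrable Q (\<lambda>s. G x s - mean_G x)"
    by (intro Bochner_Integration.integrable_diff Q.integrable_const)
  then show "integrable Q (gradient_noise x)" unfolding gradient_noise_def[abs_def] by simp
  have "(\<integral>s. (G x s - mean_G x) \<bullet> (x - x_star) \<partial>Q) = (\<integral>s. G x s - mean_G x \<partial>Q) \<bullet> (x - x_star)"
    by (rule integral_inner_left[OF int])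
  also have "(\<integral>s. G x s - mean_G x \<partial>Q) = 0"
    unfolding Bochner_Integration.integral_diff[OF Gi Q.integrable_const]
    using Q.prob_space by (simp add: mean_G_def)
  finally show "(\<integral>s. gradient_noise x s \<partial>Q) = 0" unfolding gradient_noise_def by simp
  have "AE s in Q. exp ((gradient_noise x s)\<^sup>2 / gradient_noise_bound\<^sup>2) \<le> exp 1"
    using AE_good_sample[OF x]
  proof eventually_elim
    case (elim s)
    have "(gradient_noise x s)\<^sup>2 \<le> gradient_noise_bound\<^sup>2"
      using power_mono[OF abs_gradient_noise_le[OF x elim] abs_ge_zero, of 2] by simp
    then show ?case using c by simp
  qed
  then have "(\<integral>\<^sup>+ s. ennreal (exp ((gradient_noise x s)\<^sup>2 / gradient_noise_bound\<^sup>2)) \<partial>Q)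
      \<le> (\<integral>\<^sup>+ s. ennreal (exp 1) \<partial>Q)"
    by (intro nn_integral_mono_AE) (auto elim!: eventually_mono)
  also have "\<dots> = ennreal (exp 1)" using Q.emeasure_space_1 by simp
  finally show "(\<integral>\<^sup>+ s. ennreal (exp ((gradient_noise x s)\<^sup>2 / gradient_noise_bound\<^sup>2)) \<partial>Q)
      \<le> ennreal (exp 1)" .
qed

lemma dual_norm_G_le:
  "x \<in> X \<Longrightarrow> good_sample x s \<Longrightarrow> dual_norm nrm (G x s) \<le> L + M2"
  using dual_norm_triangle[OF nrm_norm, of "mean_G x" "G x s - mean_G x"] f'_bounded mean_G_eq[of x]
  unfolding good_sample_def by force

lemma regret_on_good_path:
  assumes good: "\<forall>\<tau>\<in>{1..N}. good_sample (iterate \<tau> ss) (ss \<tau>)"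
  shows "(\<Sum>\<tau>=1..N. G (iterate \<tau> ss) (ss \<tau>) \<bullet> (iterate \<tau> ss - x_star)) \<le> sqrt N * regret_rate"
proof (cases "D = 0")
  case True
  have "u = prox_argmin 0" if u: "u \<in> X" for u
    using nrm_prox_center_le[OF u] True is_norm_nonneg[OF nrm_norm, of "u - prox_argmin 0"]
      is_norm_eq_0_iff[OF nrm_norm] unfolding D_def by fastforce
  then have "iterate \<tau> ss = x_star" for \<tau> using path.pt_in x_star(1) by metis
  then show ?thesis using True by (simp add: regret_rate_def K1_def)
next
  case False
  define q where "q = sqrt (real N)"
  have q: "q > 0" "q\<^sup>2 = real N" unfolding q_def using N_pos by auto
  define \<gamma> where "\<gamma> = D * sqrt \<mu> / (sqrt (2 * (M2\<^sup>2 + L\<^sup>2)) * q)"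
  have iterate: "iterate t ss = smd_x \<gamma> G ss t" for t
    unfolding iterate_def \<gamma>_def smd_stepsize_def q_def ..
  have Dp: "D > 0" using False D_nonneg by simp
  then have gp: "\<gamma> > 0" unfolding \<gamma>_def using mu_pos q M2_L_pos by simp
  have "(\<Sum>\<tau>=1..N. (dual_norm nrm (G (iterate \<tau> ss) (ss \<tau>)))\<^sup>2) \<le> (\<Sum>\<tau>=1..N. (L + M2)\<^sup>2)"
    using dual_norm_G_le[OF path.pt_in] good dual_norm_nonneg[OF nrm_norm]
    by (intro sum_mono power_mono) auto
  then have "\<gamma> / (2 * \<mu>) * (\<Sum>\<tau>=1..N. (dual_norm nrm (G (iterate \<tau> ss) (ss \<tau>)))\<^sup>2)
      \<le> \<gamma> / (2 * \<mu>) * (q\<^sup>2 * (L + M2)\<^sup>2)"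
    using gp mu_pos q(2) by (intro mult_left_mono) auto
  moreover have "D\<^sup>2 / (2 * \<gamma>) + \<gamma> / (2 * \<mu>) * (q\<^sup>2 * (L + M2)\<^sup>2) \<le> q * regret_rate"
    using smd_stepsize_regret_arith[OF Dp mu_pos M2_nonneg L_nonneg M2_L_pos q(1)]
    unfolding regret_rate_def K1_def \<gamma>_def .
  ultimately show ?thesis
    using smd_regret_bound[OF gp x_star(1), where N=N and G=G and ss=ss] unfolding iterate D_def q_def by linarith
qed

lemma N_f_x_star_le: "real N * f x_star \<le> real N * avg_g ss - path.path_sum value_noise N ss"
proof -
  have "(\<Sum>\<tau>=1..N. f x_star) \<le> (\<Sum>\<tau>=1..N. g (iterate \<tau> ss) (ss \<tau>) - value_noise (iterate \<tau> ss) (ss \<tau>))"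
    using x_star(2) path.pt_in mean_g_eq by (intro sum_mono) (simp add: value_noise_def)
  then show ?thesis using N_pos
    by (simp add: avg_g_def path.path_sum_def sum_subtractf)
qed

lemma N_f_x_star_ge:
  "real N * f x_star \<ge> real N * avg_g ss - path.path_sum value_noise N ss
     - (\<Sum>\<tau>=1..N. G (iterate \<tau> ss) (ss \<tau>) \<bullet> (iterate \<tau> ss - x_star)) - path.path_sum gradient_noise N ss"
proof -
  have "f x_star \<ge> g x s - value_noise x s - G x s \<bullet> (x - x_star) - gradient_noise x s" if x: "x \<in> X" for x s
  proof -
    have "f x_star \<ge> f x + f' x \<bullet> (x_star - x)" using f'_subgradient x x_star(1) by blast
    moreover have "f' x \<bullet> (x_star - x) = - (G x s \<bullet> (x - x_star)) - gradient_noise x s"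
      using mean_G_eq[OF x] unfolding gradient_noise_def by (simp add: inner_diff_left inner_diff_right algebra_simps)
    ultimately show ?thesis using mean_g_eq[OF x] unfolding value_noise_def by simp
  qed
  then have "(\<Sum>\<tau>=1..N. f x_star) \<ge> (\<Sum>\<tau>=1..N. g (iterate \<tau> ss) (ss \<tau>) - value_noise (iterate \<tau> ss) (ss \<tau>)
      - G (iterate \<tau> ss) (ss \<tau>) \<bullet> (iterate \<tau> ss - x_star) - gradient_noise (iterate \<tau> ss) (ss \<tau>))"
    using path.pt_in by (intro sum_mono) blast
  then show ?thesis using N_pos
    by (simp add: avg_g_def path.path_sum_def sum_subtractf)
qed

definition bad_path :: "'m set" where
  "bad_path = (\<Union>\<tau>\<in>{1..N}. {w \<in> space M. \<not> good_sample (iterate \<tau> (\<lambda>i. \<xi> i w)) (\<xi> \<tau> w)})"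

lemma bad_path_null: "bad_path \<in> null_sets M"
  unfolding bad_path_def
proof (intro null_sets_UN')
  fix \<tau> assume \<tau>: "\<tau> \<in> {1..N}"
  let ?Bad = "{p \<in> space (borel \<Otimes>\<^sub>M S). \<not> good_sample (fst p) (snd p)}"
  have "AE s in Q. (x, s) \<notin> ?Bad" if "x \<in> X" for x
    using AE_good_sample[OF that] by eventually_elim simp
  then have "emeasure M {w \<in> space M. (iterate \<tau> (\<lambda>i. \<xi> i w), \<xi> \<tau> w) \<in> ?Bad} = 0"
    using path.null_path_event[OF sets_good_sample, of "\<tau> - 1"] \<tau> by simp
  moreover have "{w \<in> space M. (iterate \<tau> (\<lambda>i. \<xi> i w), \<xi> \<tau> w) \<in> ?Bad} \<in> sets M"
  proof -
    have "(\<lambda>w. (iterate \<tau> (\<lambda>i. \<xi> i w), \<xi> \<tau> w)) \<in> measurable M (borel \<Otimes>\<^sub>M S)"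
      using \<tau> xi_measurable by (intro measurable_Pair path.measurable_pt_samples) auto
    from measurable_sets[OF this sets_good_sample] show ?thesis by (simp add: vimage_def Int_def conj_commute)
  qed
  moreover have "{w \<in> space M. (iterate \<tau> (\<lambda>i. \<xi> i w), \<xi> \<tau> w) \<in> ?Bad}
      = {w \<in> space M. \<not> good_sample (iterate \<tau> (\<lambda>i. \<xi> i w)) (\<xi> \<tau> w)}"
    using \<tau> measurable_space[OF xi_measurable[rule_format]] by (auto simp: space_pair_measure)
  ultimately show "{w \<in> space M. \<not> good_sample (iterate \<tau> (\<lambda>i. \<xi> i w)) (\<xi> \<tau> w)} \<in> null_sets M"
    by (metis (no_types, lifting) null_setsI)
qed simp

lemma gradient_noise_sum_le:
  assumes "\<forall>\<tau>\<in>{1..N}. good_sample (iterate \<tau> ss) (ss \<tau>)"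
  shows "path.path_sum gradient_noise N ss \<le> real N * gradient_noise_bound"
proof -
  have "path.path_sum gradient_noise N ss \<le> (\<Sum>\<tau>=1..N. gradient_noise_bound)"
    unfolding path.path_sum_def using assms abs_gradient_noise_le[OF path.pt_in]
    by (intro sum_mono) (metis abs_le_D1)
  then show ?thesis by simp
qed

lemma gradient_noise_bound_regret_rate_le:
  assumes \<Theta>: "\<Theta> \<ge> 1"
  shows "\<Theta> * gradient_noise_bound + regret_rate \<le> K1 D \<mu> M2 L + \<Theta> * (K2 D \<mu> M1 M2 L - M1)"
proof -
  define A where "A = D * M2\<^sup>2 / sqrt (2 * (M2\<^sup>2 + L\<^sup>2) * \<mu>)"
  have K2: "K2 D \<mu> M1 M2 L - M1 = A + gradient_noise_bound"
    unfolding K2_def gradient_noise_bound_def A_def by simp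
  have "A \<ge> 0" unfolding A_def using D_nonneg mu_pos by simp
  then have "A \<le> \<Theta> * A" using mult_right_mono[of 1 \<Theta> A] \<Theta> by simp
  then show ?thesis unfolding K2 regret_rate_def A_def[symmetric] by (simp add: algebra_simps)
qed

lemma interval_of_small_deviations:
  assumes \<Theta>2: "\<Theta>2 \<ge> 1"
    and good: "\<forall>\<tau>\<in>{1..N}. good_sample (iterate \<tau> ss) (ss \<tau>)"
    and dev1: "path.path_sum (\<lambda>x s. - value_noise x s) N ss < \<Theta>1 * M1 * sqrt N"
    and dev3: "path.path_sum value_noise N ss < \<Theta>3 * M1 * sqrt N"
    and dev2: "path.path_sum gradient_noise N ss \<le> \<Theta>2 * gradient_noise_bound * sqrt N"
  shows "avg_g ss - b_bound (K1 D \<mu> M2 L) (K2 D \<mu> M1 M2 L) M1 \<Theta>2 N - a_bound M1 \<Theta>3 N \<le> f x_star"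
    and "f x_star \<le> avg_g ss + a_bound M1 \<Theta>1 N"
proof -
  have N_div_sqrt: "real N * (\<Theta> / sqrt N) = \<Theta> * sqrt N" for \<Theta>
    using N_pos by (simp add: field_simps real_sqrt_mult[symmetric])
  have neg: "path.path_sum (\<lambda>x s. - value_noise x s) N ss = - path.path_sum value_noise N ss"
    unfolding path.path_sum_def by (simp add: sum_negf)
  have "real N * f x_star \<le> real N * (avg_g ss + a_bound M1 \<Theta>1 N)"
    using N_f_x_star_le[of ss] dev1 N_div_sqrt[of "\<Theta>1 * M1"]
    unfolding neg a_bound_def by (simp add: distrib_left)
  then show "f x_star \<le> avg_g ss + a_bound M1 \<Theta>1 N" using N_pos by simp
  from mult_left_mono[OF gradient_noise_bound_regret_rate_le[OF \<Theta>2], of "sqrt N"]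
  have "\<Theta>2 * gradient_noise_bound * sqrt N + sqrt N * regret_rate
      \<le> sqrt N * (K1 D \<mu> M2 L + \<Theta>2 * (K2 D \<mu> M1 M2 L - M1))"
    by (simp add: algebra_simps)
  moreover have "real N * (b_bound (K1 D \<mu> M2 L) (K2 D \<mu> M1 M2 L) M1 \<Theta>2 N + a_bound M1 \<Theta>3 N)
      = (K1 D \<mu> M2 L + \<Theta>2 * (K2 D \<mu> M1 M2 L - M1)) * sqrt N + \<Theta>3 * M1 * sqrt N"
    unfolding b_bound_def a_bound_def distrib_left N_div_sqrt ..
  ultimately have "real N * avg_g ss
      \<le> real N * (f x_star + b_bound (K1 D \<mu> M2 L) (K2 D \<mu> M1 M2 L) M1 \<Theta>2 N + a_bound M1 \<Theta>3 N)"
    using N_f_x_star_ge[of ss] regret_on_good_path[OF good] dev2 dev3 by (simp add: algebra_simps)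
  then show "avg_g ss - b_bound (K1 D \<mu> M2 L) (K2 D \<mu> M1 M2 L) M1 \<Theta>2 N - a_bound M1 \<Theta>3 N \<le> f x_star"
    using N_pos by simp
qed

definition deviation_event :: "('a \<Rightarrow> 's \<Rightarrow> real) \<Rightarrow> real \<Rightarrow> 'm set" where
  "deviation_event \<phi> t = {w \<in> space M. t \<le> path.path_sum \<phi> N (\<lambda>i. \<xi> i w)}"

text \<open>
  If \<open>gradient_noise_bound = 0\<close>, the gradient noise vanishes along good paths, so no tail event
  is needed (and the sub-Gaussian bound requires a positive scale).
\<close>

definition gradient_deviation_event :: "real \<Rightarrow> 'm set" where
  "gradient_deviation_event \<Theta> = (if gradient_noise_bound > 0
     then deviation_event gradient_noise (\<Theta> * gradient_noise_bound * sqrt N) else {})"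

lemma sets_deviation_event:
  assumes "(\<lambda>(x, s). \<phi> x s) \<in> borel_measurable (borel \<Otimes>\<^sub>M S)"
  shows "deviation_event \<phi> t \<in> sets M"
  unfolding deviation_event_def using path.measurable_path_sum_samples[OF assms] by measurable

lemma measure_gradient_deviation_event:
  assumes "\<Theta> \<ge> 0"
  shows "measure M (gradient_deviation_event \<Theta>) \<le> exp (- \<Theta>\<^sup>2 / 4)"
proof (cases "gradient_noise_bound > 0")
  case True
  have "measure M (deviation_event gradient_noise (\<Theta> * gradient_noise_bound * sqrt N)) \<le> exp (- \<Theta>\<^sup>2 / 4)"
    unfolding deviation_event_def using assms gradient_noise_mgf[OF _ True]
    by (intro path.path_sum_tail[OF measurable_gradient_noise True N_pos]) auto
  then show ?thesis unfolding gradient_deviation_event_def using True by simp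
qed (simp add: gradient_deviation_event_def)

lemma in_interval_outside_exceptional_events:
  assumes \<Theta>2: "\<Theta>2 \<ge> 1" and w: "w \<in> space M"
    and "w \<notin> bad_path" "w \<notin> deviation_event (\<lambda>x s. - value_noise x s) (\<Theta>1 * M1 * sqrt N)"
      "w \<notin> gradient_deviation_event \<Theta>2" "w \<notin> deviation_event value_noise (\<Theta>3 * M1 * sqrt N)"
  shows "avg_g (\<lambda>i. \<xi> i w) - b_bound (K1 D \<mu> M2 L) (K2 D \<mu> M1 M2 L) M1 \<Theta>2 N - a_bound M1 \<Theta>3 N \<le> f x_star
      \<and> f x_star \<le> avg_g (\<lambda>i. \<xi> i w) + a_bound M1 \<Theta>1 N"
proof -
  have good: "\<forall>\<tau>\<in>{1..N}. good_sample (iterate \<tau> (\<lambda>i. \<xi> i w)) (\<xi> \<tau> w)"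
    using assms(3) w unfolding bad_path_def by auto
  have dev1: "path.path_sum (\<lambda>x s. - value_noise x s) N (\<lambda>i. \<xi> i w) < \<Theta>1 * M1 * sqrt N"
    and dev3: "path.path_sum value_noise N (\<lambda>i. \<xi> i w) < \<Theta>3 * M1 * sqrt N"
    using assms(4,6) w unfolding deviation_event_def by auto
  have dev2: "path.path_sum gradient_noise N (\<lambda>i. \<xi> i w) \<le> \<Theta>2 * gradient_noise_bound * sqrt N"
  proof (cases "gradient_noise_bound > 0")
    case True
    then show ?thesis using assms(5) w unfolding gradient_deviation_event_def deviation_event_def by auto
  next
    case False
    then have "gradient_noise_bound = 0" using gradient_noise_bound_nonneg by linarith
    then show ?thesis using gradient_noise_sum_le[OF good] by simp
  qed
  show ?thesis using interval_of_small_deviations[OF \<Theta>2 good dev1 dev3 dev2] by blast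
qed

lemma measurable_avg_g: "(\<lambda>w. avg_g (\<lambda>i. \<xi> i w)) \<in> borel_measurable M"
proof -
  have "(\<lambda>w. g (iterate \<tau> (\<lambda>i. \<xi> i w)) (\<xi> \<tau> w)) \<in> borel_measurable M" if "\<tau> \<in> {1..N}" for \<tau>
    using measurable_compose[OF measurable_Pair[OF path.measurable_pt_samples xi_measurable[rule_format]]
        g_measurable] that
    by simp
  then show ?thesis unfolding avg_g_def by measurable
qed

lemma coverage_probability:
  assumes \<Theta>: "\<Theta>1 > 0" "\<Theta>2 > 0" "\<Theta>3 > 0"
  shows "measure M {w \<in> space M.
      avg_g (\<lambda>i. \<xi> i w) - b_bound (K1 D \<mu> M2 L) (K2 D \<mu> M1 M2 L) M1 \<Theta>2 N - a_bound M1 \<Theta>3 N \<le> f x_star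
      \<and> f x_star \<le> avg_g (\<lambda>i. \<xi> i w) + a_bound M1 \<Theta>1 N}
    \<ge> 1 - exp (- \<Theta>1\<^sup>2 / 4) - exp (1 - \<Theta>2\<^sup>2) - exp (- \<Theta>2\<^sup>2 / 4) - exp (- \<Theta>3\<^sup>2 / 4)"
    (is "measure M ?I \<ge> _")
proof (cases "\<Theta>2 \<ge> 1")
  case False
  then have "\<Theta>2\<^sup>2 < 1" using \<Theta>(2) by (simp add: power_less_one_iff abs_square_less_1)
  then have "exp (1 - \<Theta>2\<^sup>2) > 1" by simp
  then show ?thesis using measure_nonneg[of M ?I] exp_ge_zero[of "- \<Theta>1\<^sup>2 / 4"]
      exp_ge_zero[of "- \<Theta>2\<^sup>2 / 4"] exp_ge_zero[of "- \<Theta>3\<^sup>2 / 4"] by linarith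
next
  case True
  interpret prob_space M by (rule M_prob)
  define E1 where "E1 = deviation_event (\<lambda>x s. - value_noise x s) (\<Theta>1 * M1 * sqrt N)"
  define E2 where "E2 = gradient_deviation_event \<Theta>2"
  define E3 where "E3 = deviation_event value_noise (\<Theta>3 * M1 * sqrt N)"
  have sets: "bad_path \<in> sets M" "E1 \<in> sets M" "E2 \<in> sets M" "E3 \<in> sets M"
    using bad_path_null sets_deviation_event measurable_neg_value_noise measurable_gradient_noise
      measurable_value_noise unfolding E1_def E2_def E3_def gradient_deviation_event_def by auto
  have "space M - ?I \<subseteq> bad_path \<union> E1 \<union> E2 \<union> E3"
    using in_interval_outside_exceptional_events[OF True] unfolding E1_def E2_def E3_def by blast
  then have "measure M (space M - ?I) \<le> measure M (bad_path \<union> E1 \<union> E2 \<union> E3)"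
    using sets by (intro finite_measure_mono) auto
  also have "\<dots> \<le> measure M bad_path + measure M E1 + measure M E2 + measure M E3"
    using sets measure_Un_le by (smt (verit) sets.Un)
  also have "\<dots> \<le> 0 + exp (- \<Theta>1\<^sup>2 / 4) + exp (- \<Theta>2\<^sup>2 / 4) + exp (- \<Theta>3\<^sup>2 / 4)"
    using measure_eq_0_null_sets[OF bad_path_null] \<Theta>
      path.path_sum_tail[OF measurable_neg_value_noise M1_pos N_pos, of \<Theta>1] neg_value_noise_mgf
      measure_gradient_deviation_event[of \<Theta>2]
      path.path_sum_tail[OF measurable_value_noise M1_pos N_pos, of \<Theta>3] value_noise_mgf
    unfolding E1_def E2_def E3_def deviation_event_def by (intro add_mono) auto
  finally have "measure M (space M - ?I) \<le> exp (- \<Theta>1\<^sup>2 / 4) + exp (- \<Theta>2\<^sup>2 / 4) + exp (- \<Theta>3\<^sup>2 / 4)"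
    by simp
  moreover have "?I \<in> sets M" using measurable_avg_g by measurable
  ultimately show ?thesis using prob_compl[of ?I] exp_gt_zero[of "1 - \<Theta>2\<^sup>2"] by linarith
qed

end


theorem corollary2:
  fixes nrm :: "'a::euclidean_space \<Rightarrow> real"
    and X :: "'a set"
    and \<omega> :: "'a \<Rightarrow> real" and \<omega>' :: "'a \<Rightarrow> 'a" and \<mu> :: real
    and M :: "'m measure" and S :: "'s measure" and \<xi> :: "nat \<Rightarrow> 'm \<Rightarrow> 's"
    and g :: "'a \<Rightarrow> 's \<Rightarrow> real" and G :: "'a \<Rightarrow> 's \<Rightarrow> 'a"
    and f :: "'a \<Rightarrow> real" and f' :: "'a \<Rightarrow> 'a"
    and L M1 M2 :: real and N :: nat and x_star :: 'a
    and \<Theta>1 \<Theta>2 \<Theta>3 :: real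
  assumes norm: "is_norm nrm"
    and X: "X \<noteq> {}" "closed X" "bounded X" "convex X"
    and omega: "convex_on X \<omega>" "continuous_on X \<omega>"
    and omega'_subgrad: "\<forall>x\<in>dom_subdiff \<omega> X. \<forall>y\<in>X. \<omega> y \<ge> \<omega> x + \<omega>' x \<bullet> (y - x)"
    and omega'_cont: "continuous_on (dom_subdiff \<omega> X) \<omega>'"
    and mu: "\<mu> > 0"
    and strongly_convex: "\<forall>x\<in>dom_subdiff \<omega> X. \<forall>x'\<in>dom_subdiff \<omega> X.
           (x' - x) \<bullet> (\<omega>' x' - \<omega>' x) \<ge> \<mu> * (nrm (x' - x))\<^sup>2"
    and P: "prob_space M"
    and xi_meas: "\<forall>t\<ge>1. \<xi> t \<in> measurable M S"
    and xi_indep: "prob_space.indep_vars M (\<lambda>_. S) \<xi> {1..}"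
    and xi_ident: "\<forall>t\<ge>1. distr M S (\<xi> t) = distr M S (\<xi> 1)"
    and g_meas: "(\<lambda>(x, s). g x s) \<in> borel_measurable (borel \<Otimes>\<^sub>M S)"
    and G_meas: "(\<lambda>(x, s). G x s) \<in> borel_measurable (borel \<Otimes>\<^sub>M S)"
    and g_convex: "\<forall>s\<in>space S. convex_on X (\<lambda>x. g x s)"
    and G_subgrad: "\<forall>s\<in>space S. \<forall>x\<in>X. \<forall>y\<in>X. g y s \<ge> g x s + G x s \<bullet> (y - x)"
    and g_int: "\<forall>x\<in>X. integrable (distr M S (\<xi> 1)) (g x)"
    and G_int: "\<forall>x\<in>X. integrable (distr M S (\<xi> 1)) (G x)"
    and f_def: "\<forall>x\<in>X. f x = (\<integral>s. g x s \<partial>distr M S (\<xi> 1))"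
    and f'_def: "\<forall>x\<in>X. f' x = (\<integral>s. G x s \<partial>distr M S (\<xi> 1))"
    and f_convex: "convex_on X f"
    and f_lipschitz: "\<exists>C. C-lipschitz_on X f"
    and x_star: "x_star \<in> X" "\<forall>x\<in>X. f x_star \<le> f x"
    \<comment> \<open>Assumption 1\<close>
    and A1: "\<forall>x\<in>X. dual_norm nrm (f' x) \<le> L"
    \<comment> \<open>Assumption 2\<close>
    and A2: "\<forall>x\<in>X. \<forall>y\<in>X. f y \<ge> f x + f' x \<bullet> (y - x)"
    \<comment> \<open>Assumption 3\<close>
    and A3: "\<forall>x\<in>X. (\<integral>\<^sup>+s. ennreal ((g x s - f x)\<^sup>2) \<partial>distr M S (\<xi> 1)) \<le> ennreal (M1\<^sup>2)"
            "\<forall>x\<in>X. (\<integral>\<^sup>+s. ennreal ((dual_norm nrm (G x s - f' x))\<^sup>2) \<partial>distr M S (\<xi> 1))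
                     \<le> ennreal (M2\<^sup>2)"
    \<comment> \<open>Assumption 5\<close>
    and A5: "\<forall>x\<in>X. (\<integral>\<^sup>+s. ennreal (exp ((g x s - f x)\<^sup>2 / M1\<^sup>2)) \<partial>distr M S (\<xi> 1))
                     \<le> ennreal (exp 1)"
            "\<forall>x\<in>X. AE s in distr M S (\<xi> 1). dual_norm nrm (G x s - f' x) \<le> M2"
    and params: "M1 > 0" "M2 \<ge> 0" "L \<ge> 0" "M2\<^sup>2 + L\<^sup>2 > 0"
    and N: "N \<ge> 1"
    and Theta: "\<Theta>1 > 0" "\<Theta>2 > 0" "\<Theta>3 > 0"
  shows
    "let D = D_omega \<omega> X;
         \<gamma> = smd_stepsize D \<mu> M2 L N;
         x = (\<lambda>t w. smd_iter (prox \<omega> \<omega>' X) (prox_center \<omega> X) \<gamma> G (\<lambda>i. \<xi> i w) t);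
         gN = (\<lambda>w. (\<Sum>\<tau>=1..N. g (x \<tau> w) (\<xi> \<tau> w)) / real N);
         k1 = K1 D \<mu> M2 L;
         k2 = K2 D \<mu> M1 M2 L;
         Up1 = (\<lambda>w. gN w + a_bound M1 \<Theta>1 N);
         Low1 = (\<lambda>w. gN w - b_bound k1 k2 M1 \<Theta>2 N - a_bound M1 \<Theta>3 N)
     in measure M {w \<in> space M. Low1 w \<le> f x_star \<and> f x_star \<le> Up1 w}
          \<ge> 1 - exp (- \<Theta>1\<^sup>2 / 4) - exp (1 - \<Theta>2\<^sup>2) - exp (- \<Theta>2\<^sup>2 / 4) - exp (- \<Theta>3\<^sup>2 / 4)"
proof -
  have "compact X" using X(2,3) by (simp add: compact_eq_bounded_closed)
  interpret smd_problem nrm X \<omega> \<omega>' \<mu> M S \<xi> g G f f' L M1 M2 N x_star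
    by (intro smd_problem.intro distance_generating.intro iid_samples.intro smd_problem_axioms.intro)
      (fact norm X(1,4) \<open>compact X\<close> omega omega'_subgrad omega'_cont mu strongly_convex P xi_meas
        xi_indep xi_ident g_meas G_meas g_int G_int f_def f'_def x_star A1 A2 A5 params N)+
  show ?thesis
    using coverage_probability[OF Theta] unfolding Let_def avg_g_def iterate_def D_def .
qed

end
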